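(* Let $H_0$ be an admissible Hamiltonian with vector field $f$, let $g=J\nabla K_0$ be associated to $f$ via $B$ (so $\nabla K_0=B\nabla H_0$), and let $\widetilde H_0(x,\varepsilon)=x^T\mathcal H\big(I-\varepsilon^2(J(x)\mathcal H)^2\big)^{-1}x$ and $\widetilde K_0(x,\varepsilon)=x^T\mathcal K\big(I-\varepsilon^2(J(x)\mathcal K)^2\big)^{-1}x$, where $\mathcal H=\nabla^2H_0$, $\mathcal K=\nabla^2K_0=B\mathcal H$. Then $$\nabla_x\widetilde K_0(x,\varepsilon)=B\,\nabla_x\widetilde H_0(x,\varepsilon),$$ and consequently $A\,\nabla_x^2\widetilde H_0(x,\varepsilon)=\nabla_x^2\widetilde H_0(x,\varepsilon)\,A^T$ and $A\,\nabla_x^2\widetilde K_0(x,\varepsilon)=\nabla_x^2\widetilde K_0(x,\varepsilon)\,A^T$ wherever defined.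
   Context: Fix an integer $n\ge 2$. Points of $\mathbb R^{2n}$ are $x=(x_1,\dots,x_{2n})^{T}$; write $u=(x_1,\dots,x_n)^T$. Let $X(u)$ be the $n\times n$ matrix with entries $X(u)_{ij}=x_{k}$ where $k\in\{1,\dots,n\}$, $k\equiv i+j-1 \pmod n$, and let $J(x)=\begin{pmatrix}0&X(u)\\-X(u)&0\end{pmatrix}$ (a skew-symmetric $2n\times 2n$ matrix depending linearly on $x$). Let $\mathcal P$ be the $n\times n$ cyclic shift matrix ($\mathcal P_{i,i+1}=1$ for $1\le i\le n-1$, $\mathcal P_{n,1}=1$, all other entries $0$) and $A=\begin{pmatrix}\mathcal P&0\\0&\mathcal P\end{pmatrix}$. An admissible Hamiltonian is a homogeneous quadratic form $H(x)=\tfrac12 x^T\mathcal H x$ with a constant symmetric matrix $\mathcal H=\nabla^2H$ satisfying $A\mathcal H=\mathcal H A^T$; its Hamiltonian vector field is $f(x)=J(x)\nabla H(x)$. Associated vector fields: let $B=\sum_{i=0}^{n-1}\alpha_iA^i$ with $\alpha_i\in\mathbb C$ and $B^2=I$. If $H$ is an admissible Hamiltonian with vector field $f$, put $K(x)=\tfrac12 x^T B\mathcal H x$ (so $\nabla K=B\nabla H$) and $g(x)=J(x)\nabla K(x)=B^Tf(x)$; $g$ is said to be associated to $f$ via $B$. (When $B$ is complex, everything is considered over $\mathbb C^{2n}$.) The functions $\widetilde H_0,\widetilde K_0$ in the claim coincide with the conserved quantities $(2\varepsilon)^{-1}x^TJ(\frac{x+\tilde x}{2})^{-1}\tilde x$,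 $\tilde x=\Phi_f(x,\varepsilon)$ (resp. with $g$) of the Kahan maps $\Phi_f(x,\varepsilon)=(I-\varepsilon f'(x))^{-1}x$, $\Phi_g$. *)

theory Defs
  imports "Jordan_Normal_Form.Gauss_Jordan_Elimination" "Jordan_Normal_Form.Determinant"
begin

text \<open>All indices are 0-based: coordinates x_0 .. x_{2n-1} (paper: x_1 .. x_{2n}).
  Vectors/matrices are Jordan_Normal_Form vec/mat over the complex numbers.\<close>

text \<open>X(u)_{ij} = x_k with k = (i+j) mod n (0-based version of k = i+j-1 mod n).\<close>
definition Xmat :: "nat \<Rightarrow> complex vec \<Rightarrow> complex mat" where
  "Xmat n x = mat n n (\<lambda>(i,j). x $ ((i + j) mod n))"

definition Jmat :: "nat \<Rightarrow> complex vec \<Rightarrow> complex mat" where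
  "Jmat n x = mat (2*n) (2*n) (\<lambda>(i,j).
      if i < n \<and> n \<le> j then Xmat n x $$ (i, j - n)
      else if n \<le> i \<and> j < n then - (Xmat n x $$ (i - n, j))
      else 0)"

text \<open>Cyclic shift: P_{i,i+1} = 1, P_{n,1} = 1 (1-based); 0-based: P_{i,(i+1) mod n} = 1.\<close>
definition Pmat :: "nat \<Rightarrow> complex mat" where
  "Pmat n = mat n n (\<lambda>(i,j). if j = (i + 1) mod n then 1 else 0)"

definition Amat :: "nat \<Rightarrow> complex mat" where
  "Amat n = mat (2*n) (2*n) (\<lambda>(i,j).
      if i < n \<and> j < n then Pmat n $$ (i, j)
      else if n \<le> i \<and> n \<le> j then Pmat n $$ (i - n, j - n)
      else 0)"

text \<open>B = sum_{i=0}^{n-1} alpha_i A^i (entrywise, since JNF matrices have no additive monoid instance).\<close>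
definition Bmat :: "nat \<Rightarrow> (nat \<Rightarrow> complex) \<Rightarrow> complex mat" where
  "Bmat n \<alpha> = mat (2*n) (2*n) (\<lambda>(i,j). \<Sum>k<n. \<alpha> k * (Amat n ^\<^sub>m k) $$ (i,j))"

definition admissible :: "nat \<Rightarrow> real mat \<Rightarrow> bool" where
  "admissible n Hr \<longleftrightarrow> Hr \<in> carrier_mat (2*n) (2*n) \<and> Hr\<^sup>T = Hr \<and>
     Amat n * map_mat complex_of_real Hr = map_mat complex_of_real Hr * (Amat n)\<^sup>T"

text \<open>Matrix inverse (via Gauss-Jordan; meaningful when det M \<noteq> 0).\<close>
definition minv :: "complex mat \<Rightarrow> complex mat" where
  "minv M = the (mat_inverse M)"

definition Dmat :: "nat \<Rightarrow> complex mat \<Rightarrow> complex vec \<Rightarrow> real \<Rightarrow> complex mat" where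
  "Dmat n M x e = 1\<^sub>m (2*n) - (complex_of_real e)^2 \<cdot>\<^sub>m ((Jmat n x * M) * (Jmat n x * M))"

definition modH :: "nat \<Rightarrow> complex mat \<Rightarrow> complex vec \<Rightarrow> real \<Rightarrow> complex" where
  "modH n M x e = x \<bullet> ((M * minv (Dmat n M x e)) *\<^sub>v x)"

text \<open>Complex derivative (same definition as deriv in HOL-Analysis, which cannot be
  imported together with Jordan_Normal_Form because of a type-name clash).\<close>
definition cderiv :: "(complex \<Rightarrow> complex) \<Rightarrow> complex \<Rightarrow> complex" where
  "cderiv f z = (SOME D. (f has_field_derivative D) (at z))"

definition grad :: "nat \<Rightarrow> (complex vec \<Rightarrow> complex) \<Rightarrow> complex vec \<Rightarrow> complex vec" where
  "grad n F x = vec (2*n) (\<lambda>j. cderiv (\<lambda>t. F (x + t \<cdot>\<^sub>v unit_vec (2*n) j)) 0)"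

definition hess :: "nat \<Rightarrow> (complex vec \<Rightarrow> complex) \<Rightarrow> complex vec \<Rightarrow> complex mat" where
  "hess n F x = mat (2*n) (2*n)
      (\<lambda>(i,j). cderiv (\<lambda>s. grad n F (x + s \<cdot>\<^sub>v unit_vec (2*n) i) $ j) 0)"


end

theory Submission
  imports Defs
begin

text \<open>Write \<open>R(y) = (I - \<epsilon>\<^sup>2 (J(y) M)\<^sup>2)\<^sup>-\<^sup>1\<close>, so that the modified Hamiltonian is
  \<open>y\<^sup>T M R(y) y\<close>. Call \<open>C\<close> \<open>J\<close>-compatible if \<open>J(y) C = C\<^sup>T J(y)\<close> and \<open>J(C\<^sup>T w) = C\<^sup>T J(w)\<close>; the
  shift \<open>A\<close> is, and hence so is every \<open>B = \<Sum> \<alpha>\<^sub>k A\<^sup>k\<close>. If moreover \<open>C M = M C\<^sup>T\<close> (true for \<open>A\<close>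
  and \<open>B\<close> when \<open>M\<close> is admissible), then \<open>C\<^sup>T\<close> commutes with every \<open>J(w) M\<close>, hence with \<open>R(y)\<close> and
  its directional derivatives, and replacing a direction \<open>u\<close> by \<open>C\<^sup>T u\<close> multiplies those
  derivatives by \<open>C\<^sup>T\<close>.

  For an involution \<open>B\<close> this gives \<open>D(B M) = D(M)\<close>, and pushing \<open>B\<close> through the first derivative of
  \<open>y\<^sup>T B M R(y) y\<close> turns the \<open>u\<close>-derivative of \<open>K\<close> into the \<open>B\<^sup>T u\<close>-derivative of \<open>H\<close>, i.e.
  \<open>\<nabla>K = B \<nabla>H\<close>. For \<open>C = A\<close> the same manipulation shows that the second derivative
  satisfies \<open>W(A\<^sup>T u, v) = W(u, A\<^sup>T v)\<close>; as \<open>A\<^sup>T\<close> permutes the unit vectors, this is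
  \<open>A \<nabla>\<^sup>2H = \<nabla>\<^sup>2H A\<^sup>T\<close>, and the claim for \<open>K\<close> follows because \<open>B M\<close> is admissible as well.
  All derivatives are taken entrywise along lines; that of \<open>R\<close> exists by the adjugate formula.\<close>

section \<open>Differentiability at 0\<close>

definition differentiable_at0 :: "(complex \<Rightarrow> complex) \<Rightarrow> bool" where
  "differentiable_at0 f \<longleftrightarrow> (\<exists>D. (f has_field_derivative D) (at 0))"

lemma differentiable_at0_const: "differentiable_at0 (\<lambda>s. c)"
  unfolding differentiable_at0_def by (auto intro!: derivative_eq_intros)

lemma differentiable_at0_mult:
  "differentiable_at0 f \<Longrightarrow> differentiable_at0 g \<Longrightarrow> differentiable_at0 (\<lambda>s. f s * g s)"
  unfolding differentiable_at0_def by (auto intro!: derivative_eq_intros)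

lemma differentiable_at0_inverse:
  "differentiable_at0 f \<Longrightarrow> f 0 \<noteq> 0 \<Longrightarrow> differentiable_at0 (\<lambda>s. inverse (f s))"
  unfolding differentiable_at0_def by (auto intro!: derivative_eq_intros)

lemma differentiable_at0_sum:
  assumes "\<And>x. x \<in> S \<Longrightarrow> differentiable_at0 (\<lambda>s. f s x)"
  shows "differentiable_at0 (\<lambda>s. \<Sum>x\<in>S. f s x)"
proof -
  obtain D where "\<And>x. x \<in> S \<Longrightarrow> ((\<lambda>s. f s x) has_field_derivative D x) (at 0)"
    using assms unfolding differentiable_at0_def by metis
  then show ?thesis unfolding differentiable_at0_def by (blast intro: DERIV_sum)
qed

lemma differentiable_at0_prod:
  assumes "\<And>x. x \<in> S \<Longrightarrow> differentiable_at0 (\<lambda>s. f s x)"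
  shows "differentiable_at0 (\<lambda>s. \<Prod>x\<in>S. f s x)"
proof -
  obtain D where "\<And>x. x \<in> S \<Longrightarrow> ((\<lambda>s. f s x) has_field_derivative D x) (at 0)"
    using assms unfolding differentiable_at0_def by metis
  then show ?thesis
    unfolding differentiable_at0_def using has_field_derivative_prod[of S "\<lambda>x s. f s x" D 0]
    by blast
qed

lemma differentiable_at0_cong:
  "differentiable_at0 f \<Longrightarrow> (\<forall>\<^sub>F s in nhds 0. f s = g s) \<Longrightarrow> differentiable_at0 g"
  unfolding differentiable_at0_def using DERIV_cong_ev by blast

lemma differentiable_at0_eventually_nonzero:
  assumes "differentiable_at0 f" and "f 0 \<noteq> 0"
  shows "\<forall>\<^sub>F s in nhds 0. f s \<noteq> 0"
proof -
  obtain D where "(f has_field_derivative D) (at 0)"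
    using assms(1) unfolding differentiable_at0_def by auto
  then have "isCont f 0" by (rule DERIV_isCont)
  then have "(f \<longlongrightarrow> f 0) (nhds 0)" by (simp add: isCont_def tendsto_at_iff_tendsto_nhds)
  then show ?thesis using assms(2) tendsto_imp_eventually_ne by blast
qed

definition has_mat_deriv0 :: "nat \<Rightarrow> nat \<Rightarrow> (complex \<Rightarrow> complex mat) \<Rightarrow> complex mat \<Rightarrow> bool" where
  "has_mat_deriv0 m k f F \<longleftrightarrow> F \<in> carrier_mat m k \<and> (\<forall>\<^sub>F s in nhds 0. f s \<in> carrier_mat m k) \<and>
     (\<forall>i<m. \<forall>j<k. ((\<lambda>s. f s $$ (i,j)) has_field_derivative F $$ (i,j)) (at 0))"

lemma has_mat_deriv0_carrier:
  "has_mat_deriv0 m k f F \<Longrightarrow> f 0 \<in> carrier_mat m k"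
  "has_mat_deriv0 m k f F \<Longrightarrow> F \<in> carrier_mat m k"
  unfolding has_mat_deriv0_def using eventually_nhds_x_imp_x by blast+

lemma has_mat_deriv0_eventually_carrier:
  "has_mat_deriv0 m k f F \<Longrightarrow> \<forall>\<^sub>F s in nhds 0. f s \<in> carrier_mat m k"
  unfolding has_mat_deriv0_def by blast

lemma has_mat_deriv0_entry:
  "has_mat_deriv0 m k f F \<Longrightarrow> i < m \<Longrightarrow> j < k
    \<Longrightarrow> ((\<lambda>s. f s $$ (i,j)) has_field_derivative F $$ (i,j)) (at 0)"
  unfolding has_mat_deriv0_def by blast

lemma has_mat_deriv0_differentiable:
  "has_mat_deriv0 m k f F \<Longrightarrow> i < m \<Longrightarrow> j < k \<Longrightarrow> differentiable_at0 (\<lambda>s. f s $$ (i,j))"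
  unfolding differentiable_at0_def using has_mat_deriv0_entry by blast

lemma has_mat_deriv0_const:
  "C \<in> carrier_mat m k \<Longrightarrow> has_mat_deriv0 m k (\<lambda>s. C) (0\<^sub>m m k)"
  unfolding has_mat_deriv0_def by (auto intro!: derivative_eq_intros)

lemma has_mat_deriv0_smult_var:
  "X \<in> carrier_mat m k \<Longrightarrow> has_mat_deriv0 m k (\<lambda>s. s \<cdot>\<^sub>m X) X"
  unfolding has_mat_deriv0_def by (auto intro!: derivative_eq_intros)

lemma has_mat_deriv0_cong:
  assumes f: "has_mat_deriv0 m k f F" and fg: "\<forall>\<^sub>F s in nhds 0. f s = g s"
  shows "has_mat_deriv0 m k g F"
  unfolding has_mat_deriv0_def
proof (intro conjI allI impI)
  show "F \<in> carrier_mat m k" using has_mat_deriv0_carrier[OF f] by auto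
  show "\<forall>\<^sub>F s in nhds 0. g s \<in> carrier_mat m k"
    using has_mat_deriv0_eventually_carrier[OF f] fg by eventually_elim auto
  fix i j assume ij: "i < m" "j < k"
  have "\<forall>\<^sub>F s in nhds 0. f s $$ (i,j) = g s $$ (i,j)" using fg by eventually_elim simp
  then show "((\<lambda>s. g s $$ (i, j)) has_field_derivative F $$ (i, j)) (at 0)"
    using has_mat_deriv0_entry[OF f ij] DERIV_cong_ev[of 0 0] by fastforce
qed

lemma has_mat_deriv0_add:
  assumes f: "has_mat_deriv0 m k f F" and g: "has_mat_deriv0 m k g G"
  shows "has_mat_deriv0 m k (\<lambda>s. f s + g s) (F + G)"
  unfolding has_mat_deriv0_def
proof (intro conjI allI impI)
  note ev = has_mat_deriv0_eventually_carrier[OF f] has_mat_deriv0_eventually_carrier[OF g]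
  show "F + G \<in> carrier_mat m k" using has_mat_deriv0_carrier f g by auto
  show "\<forall>\<^sub>F s in nhds 0. f s + g s \<in> carrier_mat m k" using ev by eventually_elim auto
  fix i j assume ij: "i < m" "j < k"
  have "((\<lambda>s. f s $$ (i,j) + g s $$ (i,j)) has_field_derivative F $$ (i,j) + G $$ (i,j)) (at 0)"
    using has_mat_deriv0_entry[OF f ij] has_mat_deriv0_entry[OF g ij]
    by (auto intro!: derivative_eq_intros)
  moreover have "\<forall>\<^sub>F s in nhds 0. f s $$ (i,j) + g s $$ (i,j) = (f s + g s) $$ (i,j)"
    using ev by eventually_elim (use ij in auto)
  ultimately show "((\<lambda>s. (f s + g s) $$ (i, j)) has_field_derivative (F + G) $$ (i, j)) (at 0)"
    using DERIV_cong_ev[of 0 0] has_mat_deriv0_carrier[OF f] has_mat_deriv0_carrier[OF g] ij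
    by fastforce
qed

lemma has_mat_deriv0_diff:
  assumes f: "has_mat_deriv0 m k f F" and g: "has_mat_deriv0 m k g G"
  shows "has_mat_deriv0 m k (\<lambda>s. f s - g s) (F - G)"
  unfolding has_mat_deriv0_def
proof (intro conjI allI impI)
  note ev = has_mat_deriv0_eventually_carrier[OF f] has_mat_deriv0_eventually_carrier[OF g]
  show "F - G \<in> carrier_mat m k" using has_mat_deriv0_carrier(2)[OF g] by (rule minus_carrier_mat)
  show "\<forall>\<^sub>F s in nhds 0. f s - g s \<in> carrier_mat m k" using ev by eventually_elim auto
  fix i j assume ij: "i < m" "j < k"
  have "((\<lambda>s. f s $$ (i,j) - g s $$ (i,j)) has_field_derivative F $$ (i,j) - G $$ (i,j)) (at 0)"
    using has_mat_deriv0_entry[OF f ij] has_mat_deriv0_entry[OF g ij]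
    by (auto intro!: derivative_eq_intros)
  moreover have "\<forall>\<^sub>F s in nhds 0. f s $$ (i,j) - g s $$ (i,j) = (f s - g s) $$ (i,j)"
    using ev by eventually_elim (use ij in auto)
  ultimately show "((\<lambda>s. (f s - g s) $$ (i, j)) has_field_derivative (F - G) $$ (i, j)) (at 0)"
    using DERIV_cong_ev[of 0 0] has_mat_deriv0_carrier[OF f] has_mat_deriv0_carrier[OF g] ij
    by fastforce
qed

lemma has_mat_deriv0_smult:
  assumes f: "has_mat_deriv0 m k f F"
  shows "has_mat_deriv0 m k (\<lambda>s. c \<cdot>\<^sub>m f s) (c \<cdot>\<^sub>m F)"
  unfolding has_mat_deriv0_def
proof (intro conjI allI impI)
  note ev = has_mat_deriv0_eventually_carrier[OF f]
  show "c \<cdot>\<^sub>m F \<in> carrier_mat m k" using has_mat_deriv0_carrier f by auto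
  show "\<forall>\<^sub>F s in nhds 0. c \<cdot>\<^sub>m f s \<in> carrier_mat m k" using ev by eventually_elim auto
  fix i j assume ij: "i < m" "j < k"
  have "((\<lambda>s. c * f s $$ (i,j)) has_field_derivative c * F $$ (i,j)) (at 0)"
    using has_mat_deriv0_entry[OF f ij] by (auto intro!: derivative_eq_intros)
  moreover have "\<forall>\<^sub>F s in nhds 0. c * f s $$ (i,j) = (c \<cdot>\<^sub>m f s) $$ (i,j)"
    using ev by eventually_elim (use ij in auto)
  ultimately show "((\<lambda>s. (c \<cdot>\<^sub>m f s) $$ (i, j)) has_field_derivative (c \<cdot>\<^sub>m F) $$ (i, j)) (at 0)"
    using DERIV_cong_ev[of 0 0] has_mat_deriv0_carrier[OF f] ij by fastforce
qed

lemma has_mat_deriv0_mult: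
  assumes f: "has_mat_deriv0 m k f F" and g: "has_mat_deriv0 k l g G"
  shows "has_mat_deriv0 m l (\<lambda>s. f s * g s) (F * g 0 + f 0 * G)"
  unfolding has_mat_deriv0_def
proof (intro conjI allI impI)
  note c = has_mat_deriv0_carrier[OF f] has_mat_deriv0_carrier[OF g]
  note ev = has_mat_deriv0_eventually_carrier[OF f] has_mat_deriv0_eventually_carrier[OF g]
  show "F * g 0 + f 0 * G \<in> carrier_mat m l" using c by auto
  show "\<forall>\<^sub>F s in nhds 0. f s * g s \<in> carrier_mat m l" using ev by eventually_elim auto
  fix i j assume ij: "i < m" "j < l"
  have "((\<lambda>s. \<Sum>r\<in>{0..<k}. f s $$ (i,r) * g s $$ (r,j)) has_field_derivative
     (\<Sum>r\<in>{0..<k}. F $$ (i,r) * g 0 $$ (r,j) + f 0 $$ (i,r) * G $$ (r,j))) (at 0)"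
    using has_mat_deriv0_entry[OF f] has_mat_deriv0_entry[OF g] ij
    by (auto intro!: derivative_eq_intros sum.cong simp: mult.commute)
  moreover have "\<forall>\<^sub>F s in nhds 0. (\<Sum>r\<in>{0..<k}. f s $$ (i,r) * g s $$ (r,j)) = (f s * g s) $$ (i,j)"
    using ev by eventually_elim (use ij in \<open>auto simp: scalar_prod_def\<close>)
  moreover have "(\<Sum>r\<in>{0..<k}. F $$ (i,r) * g 0 $$ (r,j) + f 0 $$ (i,r) * G $$ (r,j))
      = (F * g 0 + f 0 * G) $$ (i,j)"
    using c ij by (auto simp: scalar_prod_def sum.distrib intro!: sum.cong)
  ultimately show "((\<lambda>s. (f s * g s) $$ (i, j))
      has_field_derivative (F * g 0 + f 0 * G) $$ (i, j)) (at 0)"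
    using DERIV_cong_ev[of 0 0] by fastforce
qed

lemma has_mat_deriv0_const_mult:
  assumes X: "X \<in> carrier_mat m k" and f: "has_mat_deriv0 k l f F"
  shows "has_mat_deriv0 m l (\<lambda>s. X * f s) (X * F)"
proof -
  have "X * F \<in> carrier_mat m l" using X has_mat_deriv0_carrier(2)[OF f] by simp
  then show ?thesis
    using has_mat_deriv0_mult[OF has_mat_deriv0_const[OF X] f] has_mat_deriv0_carrier[OF f]
    by (simp add: left_mult_zero_mat)
qed

lemma has_mat_deriv0_mult_const:
  assumes f: "has_mat_deriv0 m k f F" and X: "X \<in> carrier_mat k l"
  shows "has_mat_deriv0 m l (\<lambda>s. f s * X) (F * X)"
proof -
  have "F * X \<in> carrier_mat m l" using X has_mat_deriv0_carrier(2)[OF f] by simp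
  then show ?thesis
    using has_mat_deriv0_mult[OF f has_mat_deriv0_const[OF X]] has_mat_deriv0_carrier[OF f]
    by (simp add: right_mult_zero_mat)
qed

lemma has_mat_deriv0_unique:
  assumes f: "has_mat_deriv0 m k f F" and g: "has_mat_deriv0 m k g G"
    and fg: "\<forall>\<^sub>F s in nhds 0. f s = g s"
  shows "F = G"
proof (rule eq_matI)
  note c = has_mat_deriv0_carrier[OF f] has_mat_deriv0_carrier[OF g]
  fix i j assume "i < dim_row G" "j < dim_col G"
  then have ij: "i < m" "j < k" using c by auto
  have "((\<lambda>s. g s $$ (i,j)) has_field_derivative F $$ (i,j)) (at 0)"
    using has_mat_deriv0_entry[OF has_mat_deriv0_cong[OF f fg] ij] .
  then show "F $$ (i,j) = G $$ (i,j)" using has_mat_deriv0_entry[OF g ij] DERIV_unique by blast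
qed (use has_mat_deriv0_carrier[OF f] has_mat_deriv0_carrier[OF g] in auto)

lemma add_zero_smult_vec[simp]: "y \<in> carrier_vec m \<Longrightarrow> u \<in> carrier_vec m \<Longrightarrow> y + (0::complex) \<cdot>\<^sub>v u = y"
  by (intro eq_vecI) auto

lemma smult_zero_vec[simp]: "(a::complex) \<cdot>\<^sub>v 0\<^sub>v m = 0\<^sub>v m"
  by (intro eq_vecI) auto

lemma quadratic_form_line_deriv:
  assumes p: "p \<in> carrier_vec m" and p': "p' \<in> carrier_vec m"
    and q: "q \<in> carrier_vec m" and q': "q' \<in> carrier_vec m" and f: "has_mat_deriv0 m m f F"
  shows "((\<lambda>s. (p + s \<cdot>\<^sub>v p') \<bullet> (f s *\<^sub>v (q + s \<cdot>\<^sub>v q'))) has_field_derivative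
     (p' \<bullet> (f 0 *\<^sub>v q) + p \<bullet> (F *\<^sub>v q) + p \<bullet> (f 0 *\<^sub>v q'))) (at 0)"
proof -
  have f0: "f 0 \<in> carrier_mat m m" and F: "F \<in> carrier_mat m m"
    using has_mat_deriv0_carrier[OF f] by auto
  let ?S = "{0..<m}"
  have d: "((\<lambda>s. \<Sum>i\<in>?S. (p$i + s*p'$i) * (\<Sum>j\<in>?S. f s $$ (i,j) * (q$j + s*q'$j)))
      has_field_derivative (\<Sum>i\<in>?S. p'$i * (\<Sum>j\<in>?S. f 0 $$ (i,j) * q$j)
        + p$i * (\<Sum>j\<in>?S. F $$ (i,j) * q$j + f 0 $$ (i,j) * q'$j))) (at 0)"
    by (intro DERIV_sum)
      (auto intro!: derivative_eq_intros has_mat_deriv0_entry[OF f] simp: sum.distrib algebra_simps)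
  have e: "\<forall>\<^sub>F s in nhds 0. (\<Sum>i\<in>?S. (p$i + s*p'$i) * (\<Sum>j\<in>?S. f s $$ (i,j) * (q$j + s*q'$j)))
      = (p + s \<cdot>\<^sub>v p') \<bullet> (f s *\<^sub>v (q + s \<cdot>\<^sub>v q'))"
    using has_mat_deriv0_eventually_carrier[OF f]
    by eventually_elim (use p p' q q' in \<open>auto simp: scalar_prod_def intro!: sum.cong\<close>)
  have v: "(\<Sum>i\<in>?S. p'$i * (\<Sum>j\<in>?S. f 0 $$ (i,j) * q$j)
        + p$i * (\<Sum>j\<in>?S. F $$ (i,j) * q$j + f 0 $$ (i,j) * q'$j))
     = p' \<bullet> (f 0 *\<^sub>v q) + p \<bullet> (F *\<^sub>v q) + p \<bullet> (f 0 *\<^sub>v q')"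
    using p p' q q' f0 F by (auto simp: scalar_prod_def sum.distrib algebra_simps intro!: sum.cong)
  show ?thesis using d e v DERIV_cong_ev[of 0 0] by fastforce
qed

lemma differentiable_at0_det:
  assumes ev: "\<forall>\<^sub>F s in nhds 0. f s \<in> carrier_mat m m"
    and d: "\<And>i j. i < m \<Longrightarrow> j < m \<Longrightarrow> differentiable_at0 (\<lambda>s. f s $$ (i,j))"
  shows "differentiable_at0 (\<lambda>s. det (f s))"
proof -
  have "differentiable_at0
      (\<lambda>s. \<Sum>p\<in>{p. p permutes {0..<m}}. signof p * (\<Prod>i = 0..<m. f s $$ (i, p i)))"
  proof (rule differentiable_at0_sum)
    fix p assume "p \<in> {p. p permutes {0..<m}}"
    then have "\<And>i. i < m \<Longrightarrow> p i < m" using permutes_in_image by fastforce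
    then show "differentiable_at0 (\<lambda>s. signof p * (\<Prod>i = 0..<m. f s $$ (i, p i)))"
      by (intro differentiable_at0_mult differentiable_at0_const differentiable_at0_prod d) auto
  qed
  moreover have "\<forall>\<^sub>F s in nhds 0.
      (\<Sum>p\<in>{p. p permutes {0..<m}}. signof p * (\<Prod>i = 0..<m. f s $$ (i, p i))) = det (f s)"
    using ev by eventually_elim (simp add: det_def')
  ultimately show ?thesis by (rule differentiable_at0_cong)
qed

lemma differentiable_at0_adj_mat:
  assumes ev: "\<forall>\<^sub>F s in nhds 0. f s \<in> carrier_mat m m"
    and d: "\<And>i j. i < m \<Longrightarrow> j < m \<Longrightarrow> differentiable_at0 (\<lambda>s. f s $$ (i,j))"
    and ij: "i < m" "j < m"
  shows "differentiable_at0 (\<lambda>s. adj_mat (f s) $$ (i,j))"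
proof -
  have "differentiable_at0 (\<lambda>s. det (mat_delete (f s) j i))"
  proof (rule differentiable_at0_det)
    show "\<forall>\<^sub>F s in nhds 0. mat_delete (f s) j i \<in> carrier_mat (m-1) (m-1)"
      using ev by eventually_elim (rule mat_delete_carrier)
    fix a b assume ab: "a < m - 1" "b < m - 1"
    have "differentiable_at0 (\<lambda>s. f s $$ (if a < j then a else Suc a, if b < i then b else Suc b))"
      using ab by (intro d) auto
    moreover have "\<forall>\<^sub>F s in nhds 0. f s $$ (if a < j then a else Suc a, if b < i then b else Suc b)
        = mat_delete (f s) j i $$ (a,b)"
      using ev by eventually_elim (use ab in \<open>auto simp: mat_delete_def\<close>)
    ultimately show "differentiable_at0 (\<lambda>s. mat_delete (f s) j i $$ (a, b))"
      by (rule differentiable_at0_cong)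
  qed
  then have "differentiable_at0 (\<lambda>s. (-1)^(j+i) * det (mat_delete (f s) j i))"
    by (intro differentiable_at0_mult differentiable_at0_const)
  moreover have "\<forall>\<^sub>F s in nhds 0. (-1)^(j+i) * det (mat_delete (f s) j i) = adj_mat (f s) $$ (i,j)"
    using ev by eventually_elim (use ij in \<open>auto simp: adj_mat_def cofactor_def\<close>)
  ultimately show ?thesis by (rule differentiable_at0_cong)
qed

lemma minv_inverse:
  assumes A: "A \<in> carrier_mat m m" and d: "det A \<noteq> 0"
  shows "minv A \<in> carrier_mat m m" "A * minv A = 1\<^sub>m m" "minv A * A = 1\<^sub>m m"
proof -
  have "A \<in> Units (ring_mat TYPE(complex) m m)" using det_non_zero_imp_unit[OF A d] .
  then have "mat_inverse A \<noteq> None" using mat_inverse(1)[OF A, where b=m] by blast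
  then obtain B where B: "mat_inverse A = Some B" by auto
  from mat_inverse(2)[OF A B] B
  show "minv A \<in> carrier_mat m m" "A * minv A = 1\<^sub>m m" "minv A * A = 1\<^sub>m m"
    unfolding minv_def by auto
qed

lemma minv_eq_adj_mat:
  assumes A: "A \<in> carrier_mat m m" and d: "det A \<noteq> 0"
  shows "minv A = inverse (det A) \<cdot>\<^sub>m adj_mat A"
proof -
  note m = minv_inverse[OF A d] and a = adj_mat[OF A]
  have "adj_mat A = adj_mat A * (A * minv A)" using m a by simp
  also have "\<dots> = (adj_mat A * A) * minv A"
    by (rule assoc_mult_mat[symmetric, of _ m m _ m _ m]) (use m a A in auto)
  also have "\<dots> = (det A \<cdot>\<^sub>m 1\<^sub>m m) * minv A" by (subst a(3)) simp
  also have "\<dots> = det A \<cdot>\<^sub>m minv A"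
    using mult_smult_assoc_mat[of "1\<^sub>m m" m m "minv A" m "det A"] m by simp
  finally show ?thesis using d m by (auto intro!: eq_matI)
qed

lemma index_minv:
  assumes A: "A \<in> carrier_mat m m" and d: "det A \<noteq> 0" and ij: "i < m" "j < m"
  shows "minv A $$ (i,j) = inverse (det A) * adj_mat A $$ (i,j)"
proof -
  have "adj_mat A \<in> carrier_mat m m" using adj_mat[OF A] by auto
  then show ?thesis using minv_eq_adj_mat[OF A d] ij by simp
qed

lemma add_eq_zero_imp_uminus_mat:
  fixes X Y :: "complex mat"
  assumes X: "X \<in> carrier_mat m k" and Y: "Y \<in> carrier_mat m k"
    and XY: "X + Y = 0\<^sub>m m k"
  shows "Y = - X"
proof (rule eq_matI)
  fix i j assume ij: "i < dim_row (- X)" "j < dim_col (- X)"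
  have "(X + Y) $$ (i,j) = 0" using XY ij X by simp
  then show "Y $$ (i,j) = (- X) $$ (i,j)" using ij X Y by (simp add: add_eq_0_iff)
qed (use X Y in auto)

text \<open>Entries of \<open>minv (f s)\<close> are differentiable by the adjugate formula; the value of the
  derivative then follows by differentiating \<open>f s * minv (f s) = 1\<close>.\<close>

lemma has_mat_deriv0_minv:
  assumes f: "has_mat_deriv0 m m f F" and d: "det (f 0) \<noteq> 0"
  shows "has_mat_deriv0 m m (\<lambda>s. minv (f s)) (- (minv (f 0) * F * minv (f 0)))"
proof -
  note ev = has_mat_deriv0_eventually_carrier[OF f]
  have de: "\<And>i j. i < m \<Longrightarrow> j < m \<Longrightarrow> differentiable_at0 (\<lambda>s. f s $$ (i,j))"
    using has_mat_deriv0_differentiable[OF f] by auto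
  have "differentiable_at0 (\<lambda>s. det (f s))" by (rule differentiable_at0_det[OF ev de])
  from differentiable_at0_eventually_nonzero[OF this d]
  have evd: "\<forall>\<^sub>F s in nhds 0. det (f s) \<noteq> 0" .
  have diff_inv: "differentiable_at0 (\<lambda>s. minv (f s) $$ (i,j))" if ij: "i < m" "j < m" for i j
  proof -
    have "differentiable_at0 (\<lambda>s. inverse (det (f s)) * adj_mat (f s) $$ (i,j))"
      by (intro differentiable_at0_mult differentiable_at0_inverse differentiable_at0_det[OF ev de]
          differentiable_at0_adj_mat[OF ev de ij] d)
    moreover have "\<forall>\<^sub>F s in nhds 0.
        inverse (det (f s)) * adj_mat (f s) $$ (i,j) = minv (f s) $$ (i,j)"
      using ev evd by eventually_elim (use ij in \<open>simp add: index_minv\<close>)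
    ultimately show ?thesis by (rule differentiable_at0_cong)
  qed
  define R' where
    "R' = mat m m (\<lambda>(i,j). SOME D. ((\<lambda>s. minv (f s) $$ (i,j)) has_field_derivative D) (at 0))"
  have r: "has_mat_deriv0 m m (\<lambda>s. minv (f s)) R'" unfolding has_mat_deriv0_def
  proof (intro conjI allI impI)
    show "R' \<in> carrier_mat m m" unfolding R'_def by simp
    show "\<forall>\<^sub>F s in nhds 0. minv (f s) \<in> carrier_mat m m"
      using ev evd by eventually_elim (rule minv_inverse)
    fix i j assume ij: "i < m" "j < m"
    from diff_inv[OF ij]
    show "((\<lambda>s. minv (f s) $$ (i, j)) has_field_derivative R' $$ (i, j)) (at 0)"
      unfolding R'_def differentiable_at0_def using ij by (auto intro: someI_ex)
  qed
  have f0: "f 0 \<in> carrier_mat m m" and F: "F \<in> carrier_mat m m"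
    using has_mat_deriv0_carrier[OF f] by auto
  note m0 = minv_inverse[OF f0 d]
  have R': "R' \<in> carrier_mat m m" using has_mat_deriv0_carrier[OF r] by auto
  have "F * minv (f 0) + f 0 * R' = 0\<^sub>m m m"
  proof (rule has_mat_deriv0_unique[OF has_mat_deriv0_mult[OF f r] has_mat_deriv0_const])
    show "1\<^sub>m m \<in> carrier_mat m m" by simp
    show "\<forall>\<^sub>F s in nhds 0. f s * minv (f s) = 1\<^sub>m m"
      using ev evd by eventually_elim (rule minv_inverse)
  qed
  then have "minv (f 0) * (F * minv (f 0) + f 0 * R') = 0\<^sub>m m m" using m0 by simp
  moreover have "minv (f 0) * (F * minv (f 0) + f 0 * R')
      = minv (f 0) * (F * minv (f 0)) + minv (f 0) * (f 0 * R')"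
    by (rule mult_add_distrib_mat[of _ m m]) (use m0 F R' f0 in auto)
  moreover have "minv (f 0) * (f 0 * R') = R'"
    using assoc_mult_mat[of "minv (f 0)" m m "f 0" m R' m] m0 F R' f0 by simp
  moreover have "minv (f 0) * (F * minv (f 0)) = minv (f 0) * F * minv (f 0)"
    using assoc_mult_mat[of "minv (f 0)" m m F m "minv (f 0)" m] m0 F R' f0 by simp
  ultimately have "minv (f 0) * F * minv (f 0) + R' = 0\<^sub>m m m" by simp
  then have "R' = - (minv (f 0) * F * minv (f 0))"
    using m0 F R' by (intro add_eq_zero_imp_uminus_mat) auto
  with r show ?thesis by simp
qed

section \<open>The shift matrix \<open>A\<close> and the Poisson matrix \<open>J\<close>\<close>

text \<open>\<open>A\<close> is the cyclic shift acting separately on the index blocks \<open>{0..<n}\<close> and \<open>{n..<2*n}\<close>: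
  row \<open>r\<close> of \<open>A\<close> has its only nonzero entry in column \<open>shift_idx n r\<close>, and \<open>unshift_idx\<close> is the
  inverse shift.\<close>

definition shift_idx :: "nat \<Rightarrow> nat \<Rightarrow> nat" where
  "shift_idx n r = (if r < n then (r + 1) mod n else n + (r - n + 1) mod n)"

definition unshift_idx :: "nat \<Rightarrow> nat \<Rightarrow> nat" where
  "unshift_idx n r = (if r < n then (r + (n - 1)) mod n else n + (r - n + (n - 1)) mod n)"

lemma Suc_mod_less:
  "r < n \<Longrightarrow> (r + 1) mod (n::nat) = (if r + 1 = n then 0 else r + 1)"
  by auto

lemma add_pred_mod_less:
  assumes "j < (n::nat)"
  shows "(j + (n - 1)) mod n = (if j = 0 then n - 1 else j - 1)"
proof (cases "j = 0")
  case False
  then have "j + (n - 1) = (j - 1) + 1 * n" using assms by auto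
  then have "(j + (n - 1)) mod n = (j - 1) mod n" by (metis mod_mult_self1)
  then show ?thesis using False assms by auto
qed (use assms in auto)

lemma mod_less_double: "0 < n \<Longrightarrow> (a::nat) mod n < 2*n"
  using mod_less_divisor[of n a] by linarith

lemma mod_ge_divisor_iff[simp]: "0 < n \<Longrightarrow> (n \<le> (a::nat) mod n) = False"
  by (meson mod_less_divisor not_le)

lemma shift_idx_less: "0 < n \<Longrightarrow> r < 2*n \<Longrightarrow> shift_idx n r < 2*n"
  unfolding shift_idx_def by (auto simp: mod_less_double)

lemma unshift_idx_less: "0 < n \<Longrightarrow> r < 2*n \<Longrightarrow> unshift_idx n r < 2*n"
  unfolding unshift_idx_def by (auto simp: mod_less_double)

lemma shift_idx_eq_iff:
  assumes n: "0 < n" and r: "r < 2*n" and j: "j < 2*n"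
  shows "(j = shift_idx n r) = (r = unshift_idx n j)"
proof -
  consider "r < n" "j < n" | "r < n" "n \<le> j" | "n \<le> r" "j < n" | "n \<le> r" "n \<le> j" by linarith
  then show ?thesis
  proof cases
    case 1
    then show ?thesis unfolding shift_idx_def unshift_idx_def
      using Suc_mod_less[of r n] add_pred_mod_less[of j n] by auto
  next
    case 4
    then show ?thesis unfolding shift_idx_def unshift_idx_def
      using Suc_mod_less[of "r - n" n] add_pred_mod_less[of "j - n" n] r j by auto
  qed (use n in \<open>auto simp: shift_idx_def unshift_idx_def less_imp_le_nat\<close>)
qed

lemma Amat_carrier[simp]: "Amat n \<in> carrier_mat (2*n) (2*n)"
  unfolding Amat_def by simp

lemma Jmat_carrier[simp]: "Jmat n w \<in> carrier_mat (2*n) (2*n)"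
  unfolding Jmat_def by simp

lemma dim_Amat_Jmat[simp]:
  "dim_row (Amat n) = 2*n" "dim_col (Amat n) = 2*n"
  "dim_row (Jmat n w) = 2*n" "dim_col (Jmat n w) = 2*n"
  unfolding Amat_def Jmat_def by auto

lemma index_Amat:
  assumes n: "0 < n" and r: "r < 2*n" and j: "j < 2*n"
  shows "Amat n $$ (r,j) = (if j = shift_idx n r then 1 else 0)"
proof -
  consider "r < n" "j < n" | "r < n" "n \<le> j" | "n \<le> r" "j < n" | "n \<le> r" "n \<le> j" by linarith
  then show ?thesis
  proof cases
    case 4
    have "(j - n = (r - n + 1) mod n) = (j = n + (r - n + 1) mod n)" using 4 by auto
    then show ?thesis using 4 r j unfolding Amat_def Pmat_def shift_idx_def by auto
  qed (use r j n in \<open>auto simp: Amat_def Pmat_def shift_idx_def\<close>)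
qed

lemma index_Jmat:
  assumes "a < 2*n" "b < 2*n"
  shows "Jmat n w $$ (a,b) = (if a < n \<and> n \<le> b then w $ ((a + (b - n)) mod n)
     else if n \<le> a \<and> b < n then - (w $ ((a - n + b) mod n)) else 0)"
  using assms unfolding Jmat_def Xmat_def by auto

lemma Jmat_add:
  assumes n: "0 < n" and a: "a \<in> carrier_vec (2*n)" and b: "b \<in> carrier_vec (2*n)"
  shows "Jmat n (a + b) = Jmat n a + Jmat n b"
proof (rule eq_matI)
  fix i j assume "i < dim_row (Jmat n a + Jmat n b)" "j < dim_col (Jmat n a + Jmat n b)"
  hence ij: "i < 2*n" "j < 2*n" by auto
  show "Jmat n (a + b) $$ (i, j) = (Jmat n a + Jmat n b) $$ (i, j)"
    using ij a b n by (auto simp: index_Jmat mod_less_double)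
qed auto

lemma Jmat_smult:
  assumes n: "0 < n" and a: "a \<in> carrier_vec (2*n)"
  shows "Jmat n (c \<cdot>\<^sub>v a) = c \<cdot>\<^sub>m Jmat n a"
proof (rule eq_matI)
  fix i j assume "i < dim_row (c \<cdot>\<^sub>m Jmat n a)" "j < dim_col (c \<cdot>\<^sub>m Jmat n a)"
  hence ij: "i < 2*n" "j < 2*n" by auto
  show "Jmat n (c \<cdot>\<^sub>v a) $$ (i, j) = (c \<cdot>\<^sub>m Jmat n a) $$ (i, j)"
    using ij a n by (auto simp: index_Jmat mod_less_double)
qed auto

lemma index_mult_Amat:
  assumes n: "0 < n" and X: "X \<in> carrier_mat (2*n) (2*n)" and ij: "i < 2*n" "j < 2*n"
  shows "(X * Amat n) $$ (i,j) = X $$ (i, unshift_idx n j)"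
proof -
  have "(X * Amat n) $$ (i,j) = (\<Sum>r\<in>{0..<2*n}. X $$ (i,r) * Amat n $$ (r,j))"
    using X ij by (simp add: scalar_prod_def)
  also have "\<dots> = (\<Sum>r\<in>{0..<2*n}. if r = unshift_idx n j then X $$ (i,r) else 0)"
    by (intro sum.cong refl) (use n ij shift_idx_eq_iff in \<open>auto simp: index_Amat\<close>)
  finally show ?thesis using unshift_idx_less[OF n ij(2)] by simp
qed

lemma index_Amat_transpose_mult:
  assumes n: "0 < n" and X: "X \<in> carrier_mat (2*n) (2*n)" and ij: "i < 2*n" "j < 2*n"
  shows "((Amat n)\<^sup>T * X) $$ (i,j) = X $$ (unshift_idx n i, j)"
proof -
  have "((Amat n)\<^sup>T * X) $$ (i,j) = (\<Sum>r\<in>{0..<2*n}. Amat n $$ (r,i) * X $$ (r,j))"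
    using X ij by (simp add: scalar_prod_def)
  also have "\<dots> = (\<Sum>r\<in>{0..<2*n}. if r = unshift_idx n i then X $$ (r,j) else 0)"
    by (intro sum.cong refl) (use n ij shift_idx_eq_iff in \<open>auto simp: index_Amat\<close>)
  finally show ?thesis using unshift_idx_less[OF n ij(1)] by simp
qed

lemma index_Amat_mult:
  assumes n: "0 < n" and X: "X \<in> carrier_mat (2*n) (2*n)" and ij: "i < 2*n" "j < 2*n"
  shows "(Amat n * X) $$ (i,j) = X $$ (shift_idx n i, j)"
proof -
  have "(Amat n * X) $$ (i,j) = (\<Sum>r\<in>{0..<2*n}. Amat n $$ (i,r) * X $$ (r,j))"
    using X ij by (simp add: scalar_prod_def)
  also have "\<dots> = (\<Sum>r\<in>{0..<2*n}. if r = shift_idx n i then X $$ (r,j) else 0)"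
    by (intro sum.cong refl) (use n ij shift_idx_eq_iff in \<open>auto simp: index_Amat\<close>)
  finally show ?thesis using shift_idx_less[OF n ij(1)] by simp
qed

lemma index_mult_Amat_transpose:
  assumes n: "0 < n" and X: "X \<in> carrier_mat (2*n) (2*n)" and ij: "i < 2*n" "j < 2*n"
  shows "(X * (Amat n)\<^sup>T) $$ (i,j) = X $$ (i, shift_idx n j)"
proof -
  have "(X * (Amat n)\<^sup>T) $$ (i,j) = (\<Sum>r\<in>{0..<2*n}. X $$ (i,r) * Amat n $$ (j,r))"
    using X ij by (simp add: scalar_prod_def)
  also have "\<dots> = (\<Sum>r\<in>{0..<2*n}. if r = shift_idx n j then X $$ (i,r) else 0)"
    by (intro sum.cong refl) (use n ij shift_idx_eq_iff in \<open>auto simp: index_Amat\<close>)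
  finally show ?thesis using shift_idx_less[OF n ij(2)] by simp
qed

lemma index_Amat_transpose_mult_vec:
  assumes n: "0 < n" and w: "w \<in> carrier_vec (2*n)" and i: "i < 2*n"
  shows "((Amat n)\<^sup>T *\<^sub>v w) $ i = w $ (unshift_idx n i)"
proof -
  have "((Amat n)\<^sup>T *\<^sub>v w) $ i = (\<Sum>r\<in>{0..<2*n}. Amat n $$ (r,i) * w $ r)"
    using w i by (simp add: scalar_prod_def)
  also have "\<dots> = (\<Sum>r\<in>{0..<2*n}. if r = unshift_idx n i then w $ r else 0)"
    by (intro sum.cong refl) (use n i shift_idx_eq_iff in \<open>auto simp: index_Amat\<close>)
  finally show ?thesis using unshift_idx_less[OF n i] by simp
qed

text \<open>The entries of \<open>X(w)\<close> depend only on \<open>(i + j) mod n\<close>, so shifting the column index of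
  \<open>J(w)\<close> is the same as shifting its row index, or the argument \<open>w\<close>.\<close>

lemma Jmat_mult_Amat:
  assumes n: "0 < n"
  shows "Jmat n w * Amat n = (Amat n)\<^sup>T * Jmat n w"
proof (rule eq_matI)
  fix i j assume ij: "i < dim_row ((Amat n)\<^sup>T * Jmat n w)" "j < dim_col ((Amat n)\<^sup>T * Jmat n w)"
  hence ij: "i < 2*n" "j < 2*n" by auto
  have l: "(Jmat n w * Amat n) $$ (i,j) = Jmat n w $$ (i, unshift_idx n j)"
    by (rule index_mult_Amat[OF n _ ij]) simp
  have r: "((Amat n)\<^sup>T * Jmat n w) $$ (i,j) = Jmat n w $$ (unshift_idx n i, j)"
    by (rule index_Amat_transpose_mult[OF n _ ij]) simp
  have t1: "unshift_idx n i < 2*n" "unshift_idx n j < 2*n" using unshift_idx_less n ij by auto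
  consider "i < n" "j < n" | "i < n" "n \<le> j" | "n \<le> i" "j < n" | "n \<le> i" "n \<le> j" by linarith
  hence "Jmat n w $$ (i, unshift_idx n j) = Jmat n w $$ (unshift_idx n i, j)"
  proof cases
    case 2
    have "(i + (j - n + (n - 1)) mod n) mod n = ((i + (n - 1)) mod n + (j - n)) mod n"
      by (simp add: mod_add_right_eq mod_add_left_eq add_ac)
    thus ?thesis using 2 t1 n unfolding index_Jmat[OF ij(1) t1(2)] index_Jmat[OF t1(1) ij(2)]
      by (auto simp: unshift_idx_def)
  next
    case 3
    have "(i - n + (j + (n - 1)) mod n) mod n = ((i - n + (n - 1)) mod n + j) mod n"
      by (simp add: mod_add_right_eq mod_add_left_eq add_ac)
    thus ?thesis using 3 t1 n unfolding index_Jmat[OF ij(1) t1(2)] index_Jmat[OF t1(1) ij(2)]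
      by (auto simp: unshift_idx_def)
  qed (use t1 n ij in \<open>auto simp: index_Jmat unshift_idx_def\<close>)
  thus "(Jmat n w * Amat n) $$ (i, j) = ((Amat n)\<^sup>T * Jmat n w) $$ (i, j)" using l r by simp
qed auto

lemma Jmat_Amat_transpose_mult_vec:
  assumes n: "0 < n" and w: "w \<in> carrier_vec (2*n)"
  shows "Jmat n ((Amat n)\<^sup>T *\<^sub>v w) = (Amat n)\<^sup>T * Jmat n w"
proof (rule eq_matI)
  fix i j assume ij: "i < dim_row ((Amat n)\<^sup>T * Jmat n w)" "j < dim_col ((Amat n)\<^sup>T * Jmat n w)"
  hence ij: "i < 2*n" "j < 2*n" by auto
  have r: "((Amat n)\<^sup>T * Jmat n w) $$ (i,j) = Jmat n w $$ (unshift_idx n i, j)"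
    by (rule index_Amat_transpose_mult[OF n _ ij]) simp
  have t1: "unshift_idx n i < 2*n" using unshift_idx_less n ij by auto
  have v: "\<And>k. k < n \<Longrightarrow> ((Amat n)\<^sup>T *\<^sub>v w) $ k = w $ ((k + (n-1)) mod n)"
    using index_Amat_transpose_mult_vec[OF n w] by (auto simp: unshift_idx_def)
  consider "i < n" "j < n" | "i < n" "n \<le> j" | "n \<le> i" "j < n" | "n \<le> i" "n \<le> j" by linarith
  hence "Jmat n ((Amat n)\<^sup>T *\<^sub>v w) $$ (i, j) = Jmat n w $$ (unshift_idx n i, j)"
  proof cases
    case 2
    have mm: "((i + (j - n)) mod n + (n - 1)) mod n = ((i + (n - 1)) mod n + (j - n)) mod n"
      by (simp add: mod_add_right_eq mod_add_left_eq add_ac)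
    have e1: "Jmat n ((Amat n)\<^sup>T *\<^sub>v w) $$ (i,j) = ((Amat n)\<^sup>T *\<^sub>v w) $ ((i + (j-n)) mod n)"
      using index_Jmat[OF ij] 2 by simp
    have e2: "((Amat n)\<^sup>T *\<^sub>v w) $ ((i + (j-n)) mod n)
        = w $ (((i + (j - n)) mod n + (n - 1)) mod n)"
      by (rule v) (use n in simp)
    have e3: "Jmat n w $$ (unshift_idx n i, j) = w $ (((i + (n - 1)) mod n + (j - n)) mod n)"
      using index_Jmat[OF t1 ij(2)] 2 n by (simp add: unshift_idx_def)
    show ?thesis unfolding e1 e2 e3 mm by (rule refl)
  next
    case 3
    have mm: "((i - n + j) mod n + (n - 1)) mod n = ((i - n + (n - 1)) mod n + j) mod n"
      by (simp add: mod_add_right_eq mod_add_left_eq add_ac)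
    have e1: "Jmat n ((Amat n)\<^sup>T *\<^sub>v w) $$ (i,j) = - (((Amat n)\<^sup>T *\<^sub>v w) $ ((i - n + j) mod n))"
      using index_Jmat[OF ij] 3 by simp
    have e2: "((Amat n)\<^sup>T *\<^sub>v w) $ ((i - n + j) mod n) = w $ (((i - n + j) mod n + (n - 1)) mod n)"
      by (rule v) (use n in simp)
    have e3: "Jmat n w $$ (unshift_idx n i, j) = - (w $ ((unshift_idx n i - n + j) mod n))"
      using index_Jmat[OF t1 ij(2)] 3 n by (simp add: unshift_idx_def)
    have e4: "unshift_idx n i - n = (i - n + (n - 1)) mod n" using 3 by (simp add: unshift_idx_def)
    show ?thesis unfolding e1 e2 e3 e4 mm by (rule refl)
  qed (use t1 n ij in \<open>auto simp: index_Jmat unshift_idx_def\<close>)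
  thus "Jmat n ((Amat n)\<^sup>T *\<^sub>v w) $$ (i, j) = ((Amat n)\<^sup>T * Jmat n w) $$ (i, j)" using r by simp
qed (auto simp: Jmat_def)

context fixes n :: nat
begin

text \<open>Instances of generic matrix laws at the fixed dimension \<open>2*n\<close>: in the generic versions the
  inner dimensions do not occur in the conclusion, so the simplifier cannot use them.\<close>

lemma sq_assoc[simp]:
  "A \<in> carrier_mat (2*n) (2*n) \<Longrightarrow> B \<in> carrier_mat (2*n) (2*n) \<Longrightarrow> C \<in> carrier_mat (2*n) (2*n)
    \<Longrightarrow> (A * B) * C = A * (B * (C :: complex mat))"
  by (rule assoc_mult_mat)

lemma sq_assoc_vec[simp]:
  "A \<in> carrier_mat (2*n) (2*n) \<Longrightarrow> B \<in> carrier_mat (2*n) (2*n) \<Longrightarrow> v \<in> carrier_vec (2*n)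
    \<Longrightarrow> (A * B) *\<^sub>v v = A *\<^sub>v (B *\<^sub>v (v :: complex vec))"
  by (rule assoc_mult_mat_vec)

lemma sq_mult_carrier[simp]:
  "A \<in> carrier_mat (2*n) (2*n) \<Longrightarrow> B \<in> carrier_mat (2*n) (2*n)
    \<Longrightarrow> A * (B :: complex mat) \<in> carrier_mat (2*n) (2*n)"
  by (rule mult_carrier_mat)

lemma sq_vec_carrier[simp]:
  "A \<in> carrier_mat (2*n) (2*n) \<Longrightarrow> v \<in> carrier_vec (2*n)
    \<Longrightarrow> A *\<^sub>v (v :: complex vec) \<in> carrier_vec (2*n)"
  by (rule mult_mat_vec_carrier)

lemma sq_add_carrier[simp]:
  "A \<in> carrier_mat (2*n) (2*n) \<Longrightarrow> B \<in> carrier_mat (2*n) (2*n) \<Longrightarrow> A + B \<in> carrier_mat (2*n) (2*n)"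
  by simp

lemma sq_uminus_carrier[simp]: "A \<in> carrier_mat (2*n) (2*n) \<Longrightarrow> - A \<in> carrier_mat (2*n) (2*n)"
  by (rule uminus_carrier_mat)

lemma sq_minus_carrier[simp]: "B \<in> carrier_mat (2*n) (2*n) \<Longrightarrow> A - B \<in> carrier_mat (2*n) (2*n)"
  by (rule minus_carrier_mat)

lemma sq_zero_right[simp]:
  "A \<in> carrier_mat (2*n) (2*n) \<Longrightarrow> A * 0\<^sub>m (2*n) (2*n) = (0\<^sub>m (2*n) (2*n) :: complex mat)"
  by (intro eq_matI) auto

lemma sq_zero_left[simp]:
  "A \<in> carrier_mat (2*n) (2*n) \<Longrightarrow> 0\<^sub>m (2*n) (2*n) * A = (0\<^sub>m (2*n) (2*n) :: complex mat)"
  by (intro eq_matI) auto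

lemma sq_add_zero_r[simp]: "A \<in> carrier_mat (2*n) (2*n) \<Longrightarrow> A + 0\<^sub>m (2*n) (2*n) = (A :: complex mat)"
  by (intro eq_matI) auto

lemma sq_add_zero_l[simp]: "A \<in> carrier_mat (2*n) (2*n) \<Longrightarrow> 0\<^sub>m (2*n) (2*n) + A = (A :: complex mat)"
  by (intro eq_matI) auto

lemma sq_zero_minus[simp]:
  "A \<in> carrier_mat (2*n) (2*n) \<Longrightarrow> 0\<^sub>m (2*n) (2*n) - A = - (A :: complex mat)"
  by (intro eq_matI) auto

lemma sq_smult_right[simp]:
  "A \<in> carrier_mat (2*n) (2*n) \<Longrightarrow> B \<in> carrier_mat (2*n) (2*n)
    \<Longrightarrow> A * (c \<cdot>\<^sub>m B) = c \<cdot>\<^sub>m (A * (B :: complex mat))"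
  by (rule mult_smult_distrib)

lemma sq_smult_left[simp]:
  "A \<in> carrier_mat (2*n) (2*n) \<Longrightarrow> B \<in> carrier_mat (2*n) (2*n)
    \<Longrightarrow> (c \<cdot>\<^sub>m A) * B = c \<cdot>\<^sub>m (A * (B :: complex mat))"
  by (rule mult_smult_assoc_mat)

lemma sq_uminus_right[simp]:
  "A \<in> carrier_mat (2*n) (2*n) \<Longrightarrow> B \<in> carrier_mat (2*n) (2*n)
    \<Longrightarrow> A * (- B) = - (A * (B :: complex mat))"
  by (rule uminus_mult_right_mat) auto

lemma sq_uminus_left[simp]:
  "A \<in> carrier_mat (2*n) (2*n) \<Longrightarrow> B \<in> carrier_mat (2*n) (2*n)
    \<Longrightarrow> (- A) * B = - (A * (B :: complex mat))"
  by (rule uminus_mult_left_mat) auto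

lemma smult_uminus_mat[simp]: "c \<cdot>\<^sub>m (- A) = - (c \<cdot>\<^sub>m (A :: complex mat))"
  by (intro eq_matI) auto

lemma sq_add_mult[simp]:
  "A \<in> carrier_mat (2*n) (2*n) \<Longrightarrow> B \<in> carrier_mat (2*n) (2*n) \<Longrightarrow> C \<in> carrier_mat (2*n) (2*n)
    \<Longrightarrow> (A + B) * C = A * C + B * (C :: complex mat)"
  by (rule add_mult_distrib_mat)

lemma sq_mult_add[simp]:
  "A \<in> carrier_mat (2*n) (2*n) \<Longrightarrow> B \<in> carrier_mat (2*n) (2*n) \<Longrightarrow> C \<in> carrier_mat (2*n) (2*n)
    \<Longrightarrow> A * (B + C) = A * B + A * (C :: complex mat)"
  by (rule mult_add_distrib_mat)

lemma sq_add_assoc[simp]: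
  "A \<in> carrier_mat (2*n) (2*n) \<Longrightarrow> B \<in> carrier_mat (2*n) (2*n) \<Longrightarrow> C \<in> carrier_mat (2*n) (2*n)
    \<Longrightarrow> (A + B) + C = A + (B + (C :: complex mat))"
  by (rule assoc_add_mat)

lemma sq_add_comm:
  "A \<in> carrier_mat (2*n) (2*n) \<Longrightarrow> B \<in> carrier_mat (2*n) (2*n) \<Longrightarrow> A + B = B + (A :: complex mat)"
  by (rule comm_add_mat)

lemma sq_add_lcomm:
  "A \<in> carrier_mat (2*n) (2*n) \<Longrightarrow> B \<in> carrier_mat (2*n) (2*n) \<Longrightarrow> C \<in> carrier_mat (2*n) (2*n)
    \<Longrightarrow> A + (B + C) = B + (A + (C :: complex mat))"
  by (metis assoc_add_mat comm_add_mat)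

lemma sq_mat_vec_zero[simp]:
  "A \<in> carrier_mat (2*n) (2*n) \<Longrightarrow> A *\<^sub>v 0\<^sub>v (2*n) = (0\<^sub>v (2*n) :: complex vec)"
  by (intro eq_vecI) (auto simp: scalar_prod_def)

lemma sq_add_mat_vec[simp]:
  "A \<in> carrier_mat (2*n) (2*n) \<Longrightarrow> B \<in> carrier_mat (2*n) (2*n) \<Longrightarrow> v \<in> carrier_vec (2*n)
    \<Longrightarrow> (A + B) *\<^sub>v v = A *\<^sub>v v + B *\<^sub>v (v :: complex vec)"
  by (rule add_mult_distrib_mat_vec)

lemma sq_smult_mat_vec[simp]:
  "A \<in> carrier_mat (2*n) (2*n) \<Longrightarrow> v \<in> carrier_vec (2*n)
    \<Longrightarrow> (c \<cdot>\<^sub>m A) *\<^sub>v v = c \<cdot>\<^sub>v (A *\<^sub>v (v :: complex vec))"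
  by (intro eq_vecI) (auto simp: scalar_prod_def sum_distrib_left mult_ac)

lemma sq_mat_vec_smult[simp]:
  "A \<in> carrier_mat (2*n) (2*n) \<Longrightarrow> v \<in> carrier_vec (2*n)
    \<Longrightarrow> A *\<^sub>v (c \<cdot>\<^sub>v v) = c \<cdot>\<^sub>v (A *\<^sub>v (v :: complex vec))"
  by (rule mult_mat_vec)

lemma sq_mat_vec_add[simp]:
  "A \<in> carrier_mat (2*n) (2*n) \<Longrightarrow> v \<in> carrier_vec (2*n) \<Longrightarrow> w \<in> carrier_vec (2*n)
    \<Longrightarrow> A *\<^sub>v (v + w) = A *\<^sub>v v + A *\<^sub>v (w :: complex vec)"
  by (rule mult_add_distrib_mat_vec)

lemma sq_scal_add[simp]:
  "u \<in> carrier_vec (2*n) \<Longrightarrow> v \<in> carrier_vec (2*n) \<Longrightarrow> w \<in> carrier_vec (2*n)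
    \<Longrightarrow> u \<bullet> (v + w) = u \<bullet> v + u \<bullet> (w :: complex vec)"
  by (rule scalar_prod_add_distrib)

lemma sq_scal_smult[simp]:
  "u \<in> carrier_vec (2*n) \<Longrightarrow> v \<in> carrier_vec (2*n) \<Longrightarrow> u \<bullet> (c \<cdot>\<^sub>v v) = c * (u \<bullet> (v :: complex vec))"
  by (rule scalar_prod_smult_distrib)

lemma sq_add_scal[simp]:
  "u \<in> carrier_vec (2*n) \<Longrightarrow> v \<in> carrier_vec (2*n) \<Longrightarrow> w \<in> carrier_vec (2*n)
    \<Longrightarrow> (u + v) \<bullet> w = u \<bullet> w + v \<bullet> (w :: complex vec)"
  by (rule add_scalar_prod_distrib)

lemma sq_smult_scal[simp]:
  "u \<in> carrier_vec (2*n) \<Longrightarrow> v \<in> carrier_vec (2*n) \<Longrightarrow> (c \<cdot>\<^sub>v u) \<bullet> v = c * (u \<bullet> (v :: complex vec))"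
  by (rule smult_scalar_prod_distrib)

section \<open>Matrices compatible with \<open>J\<close>\<close>

definition J_compatible :: "complex mat \<Rightarrow> bool" where
  "J_compatible C \<longleftrightarrow> C \<in> carrier_mat (2*n) (2*n) \<and> (\<forall>w. Jmat n w * C = C\<^sup>T * Jmat n w) \<and>
     (\<forall>w \<in> carrier_vec (2*n). Jmat n (C\<^sup>T *\<^sub>v w) = C\<^sup>T * Jmat n w)"

lemma J_compatible_Amat: "0 < n \<Longrightarrow> J_compatible (Amat n)"
  unfolding J_compatible_def using Jmat_mult_Amat Jmat_Amat_transpose_mult_vec by auto

lemma J_compatible_one: "J_compatible (1\<^sub>m (2*n))"
  unfolding J_compatible_def by (auto simp: right_mult_one_mat left_mult_one_mat)

lemma J_compatible_mult:
  assumes g1: "J_compatible C1" and g2: "J_compatible C2" and c: "C1 * C2 = C2 * C1"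
  shows "J_compatible (C1 * C2)"
proof -
  have C1: "C1 \<in> carrier_mat (2*n) (2*n)" and C2: "C2 \<in> carrier_mat (2*n) (2*n)"
    using g1 g2 unfolding J_compatible_def by auto
  have tr: "(C1 * C2)\<^sup>T = C1\<^sup>T * C2\<^sup>T"
    using c transpose_mult[OF C2 C1] by simp
  have tr2: "(C1 * C2)\<^sup>T = C2\<^sup>T * C1\<^sup>T" using transpose_mult[OF C1 C2] .
  have j: "Jmat n w * (C1 * C2) = (C1 * C2)\<^sup>T * Jmat n w" for w
  proof -
    have "Jmat n w * (C1 * C2) = (Jmat n w * C1) * C2"
      using C1 C2 by (simp del: sq_assoc add: sq_assoc[symmetric])
    also have "\<dots> = (C1\<^sup>T * Jmat n w) * C2" using g1 unfolding J_compatible_def by simp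
    also have "\<dots> = C1\<^sup>T * (Jmat n w * C2)"
      using C1 C2 by (simp add: assoc_mult_mat[of _ "2*n" "2*n"])
    also have "\<dots> = C1\<^sup>T * (C2\<^sup>T * Jmat n w)" using g2 unfolding J_compatible_def by simp
    also have "\<dots> = (C1\<^sup>T * C2\<^sup>T) * Jmat n w" using C1 C2 by simp
    finally show ?thesis using tr by simp
  qed
  have v: "Jmat n ((C1 * C2)\<^sup>T *\<^sub>v w) = (C1 * C2)\<^sup>T * Jmat n w" if w: "w \<in> carrier_vec (2*n)" for w
  proof -
    have "(C1 * C2)\<^sup>T *\<^sub>v w = C2\<^sup>T *\<^sub>v (C1\<^sup>T *\<^sub>v w)" using tr2 C1 C2 w by simp
    hence "Jmat n ((C1 * C2)\<^sup>T *\<^sub>v w) = C2\<^sup>T * Jmat n (C1\<^sup>T *\<^sub>v w)"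
      using g2 C1 w unfolding J_compatible_def by simp
    also have "\<dots> = C2\<^sup>T * (C1\<^sup>T * Jmat n w)" using g1 w unfolding J_compatible_def by simp
    also have "\<dots> = (C2\<^sup>T * C1\<^sup>T) * Jmat n w" using C1 C2 by simp
    finally show ?thesis using tr2 by simp
  qed
  show ?thesis unfolding J_compatible_def using j v C1 C2 by auto
qed

lemma pow_mat_commute:
  assumes A: "A \<in> carrier_mat m m"
  shows "A ^\<^sub>m k * A = A * A ^\<^sub>m k"
proof (induction k)
  case 0 thus ?case using A by (simp add: right_mult_one_mat left_mult_one_mat)
next
  case (Suc k)
  have "A ^\<^sub>m Suc k * A = (A ^\<^sub>m k * A) * A" by simp
  also have "\<dots> = (A * A ^\<^sub>m k) * A" using Suc by simp
  also have "\<dots> = A * (A ^\<^sub>m k * A)" using assoc_mult_mat[OF A pow_carrier_mat[OF A] A] by simp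
  finally show ?case by simp
qed

lemma J_compatible_pow:
  assumes "J_compatible A"
  shows "J_compatible (A ^\<^sub>m k)"
proof (induction k)
  case 0
  have "A \<in> carrier_mat (2*n) (2*n)" using assms unfolding J_compatible_def by auto
  thus ?case using J_compatible_one by simp
next
  case (Suc k)
  have A: "A \<in> carrier_mat (2*n) (2*n)" using assms unfolding J_compatible_def by auto
  show ?case using J_compatible_mult[OF Suc assms pow_mat_commute[OF A]] by simp
qed

definition lincomb :: "(nat \<Rightarrow> complex) \<Rightarrow> (nat \<Rightarrow> complex mat) \<Rightarrow> complex mat" where
  "lincomb \<beta> Cs = mat (2*n) (2*n) (\<lambda>(i,j). \<Sum>k<n. \<beta> k * Cs k $$ (i,j))"

lemma Bmat_eq_lincomb: "Bmat n \<alpha> = lincomb \<alpha> (\<lambda>k. Amat n ^\<^sub>m k)"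
  unfolding Bmat_def lincomb_def by simp

lemma lincomb_carrier[simp]:
  "lincomb \<beta> Cs \<in> carrier_mat (2*n) (2*n)" unfolding lincomb_def by simp

lemma lincomb_mult_right:
  assumes Cs: "\<And>k. k < n \<Longrightarrow> Cs k \<in> carrier_mat (2*n) (2*n)"
    and X: "X \<in> carrier_mat (2*n) (2*n)"
  shows "lincomb \<beta> Cs * X = lincomb \<beta> (\<lambda>k. Cs k * X)"
proof (rule eq_matI)
  fix i j assume "i < dim_row (lincomb \<beta> (\<lambda>k. Cs k * X))"
    "j < dim_col (lincomb \<beta> (\<lambda>k. Cs k * X))"
  hence ij: "i < 2*n" "j < 2*n" unfolding lincomb_def by auto
  have "(lincomb \<beta> Cs * X) $$ (i,j) = (\<Sum>r\<in>{0..<2*n}. (\<Sum>k<n. \<beta> k * Cs k $$ (i,r)) * X $$ (r,j))"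
    using ij X unfolding lincomb_def by (simp add: scalar_prod_def)
  also have "\<dots> = (\<Sum>k<n. \<beta> k * (\<Sum>r\<in>{0..<2*n}. Cs k $$ (i,r) * X $$ (r,j)))"
    by (simp add: sum_distrib_left sum_distrib_right sum.swap[of _ "{0..<2*n}"] mult.assoc)
  also have "\<dots> = lincomb \<beta> (\<lambda>k. Cs k * X) $$ (i,j)"
  proof -
    have "\<And>k. k < n \<Longrightarrow> (Cs k * X) $$ (i,j) = (\<Sum>r\<in>{0..<2*n}. Cs k $$ (i,r) * X $$ (r,j))"
      subgoal for k using Cs[of k] X ij by (simp add: scalar_prod_def) done
    thus ?thesis using ij unfolding lincomb_def by auto
  qed
  finally show "(lincomb \<beta> Cs * X) $$ (i, j) = lincomb \<beta> (\<lambda>k. Cs k * X) $$ (i, j)" .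
qed (use X in \<open>auto simp: lincomb_def\<close>)

lemma lincomb_mult_left:
  assumes Cs: "\<And>k. k < n \<Longrightarrow> Cs k \<in> carrier_mat (2*n) (2*n)"
    and X: "X \<in> carrier_mat (2*n) (2*n)"
  shows "X * lincomb \<beta> Cs = lincomb \<beta> (\<lambda>k. X * Cs k)"
proof (rule eq_matI)
  fix i j assume "i < dim_row (lincomb \<beta> (\<lambda>k. X * Cs k))"
    "j < dim_col (lincomb \<beta> (\<lambda>k. X * Cs k))"
  hence ij: "i < 2*n" "j < 2*n" unfolding lincomb_def by auto
  have "(X * lincomb \<beta> Cs) $$ (i,j) = (\<Sum>r\<in>{0..<2*n}. X $$ (i,r) * (\<Sum>k<n. \<beta> k * Cs k $$ (r,j)))"
    using ij X unfolding lincomb_def by (simp add: scalar_prod_def)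
  also have "\<dots> = (\<Sum>r\<in>{0..<2*n}. \<Sum>k<n. \<beta> k * (X $$ (i,r) * Cs k $$ (r,j)))"
    by (simp add: sum_distrib_left mult_ac)
  also have "\<dots> = (\<Sum>k<n. \<Sum>r\<in>{0..<2*n}. \<beta> k * (X $$ (i,r) * Cs k $$ (r,j)))"
    by (rule sum.swap)
  also have "\<dots> = (\<Sum>k<n. \<beta> k * (\<Sum>r\<in>{0..<2*n}. X $$ (i,r) * Cs k $$ (r,j)))"
    by (simp add: sum_distrib_left)
  also have "\<dots> = lincomb \<beta> (\<lambda>k. X * Cs k) $$ (i,j)"
  proof -
    have "\<And>k. k < n \<Longrightarrow> (X * Cs k) $$ (i,j) = (\<Sum>r\<in>{0..<2*n}. X $$ (i,r) * Cs k $$ (r,j))"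
      subgoal for k using Cs[of k] X ij by (simp add: scalar_prod_def) done
    thus ?thesis using ij unfolding lincomb_def by auto
  qed
  finally show "(X * lincomb \<beta> Cs) $$ (i, j) = lincomb \<beta> (\<lambda>k. X * Cs k) $$ (i, j)" .
qed (use X in \<open>auto simp: lincomb_def\<close>)

lemma index_lincomb:
  "i < 2*n \<Longrightarrow> j < 2*n \<Longrightarrow> lincomb \<beta> Cs $$ (i,j) = (\<Sum>k<n. \<beta> k * Cs k $$ (i,j))"
  unfolding lincomb_def by simp

lemma transpose_lincomb:
  assumes Cs: "\<And>k. k < n \<Longrightarrow> Cs k \<in> carrier_mat (2*n) (2*n)"
  shows "(lincomb \<beta> Cs)\<^sup>T = lincomb \<beta> (\<lambda>k. (Cs k)\<^sup>T)"
proof (rule eq_matI)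
  fix i j assume "i < dim_row (lincomb \<beta> (\<lambda>k. (Cs k)\<^sup>T))"
    "j < dim_col (lincomb \<beta> (\<lambda>k. (Cs k)\<^sup>T))"
  hence ij: "i < 2*n" "j < 2*n" unfolding lincomb_def by auto
  have "\<And>k. k < n \<Longrightarrow> (Cs k)\<^sup>T $$ (i,j) = Cs k $$ (j,i)"
    subgoal for k using Cs[of k] ij by simp done
  thus "(lincomb \<beta> Cs)\<^sup>T $$ (i, j) = lincomb \<beta> (\<lambda>k. (Cs k)\<^sup>T) $$ (i, j)"
    using ij unfolding lincomb_def by auto
qed (auto simp: lincomb_def)

lemma index_lincomb_mult_vec:
  assumes Cs: "\<And>k. k < n \<Longrightarrow> Cs k \<in> carrier_mat (2*n) (2*n)"
    and w: "w \<in> carrier_vec (2*n)" and i: "i < 2*n"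
  shows "(lincomb \<beta> Cs *\<^sub>v w) $ i = (\<Sum>k<n. \<beta> k * (Cs k *\<^sub>v w) $ i)"
proof -
  have "(lincomb \<beta> Cs *\<^sub>v w) $ i = (\<Sum>r\<in>{0..<2*n}. (\<Sum>k<n. \<beta> k * Cs k $$ (i,r)) * w $ r)"
    using i w unfolding lincomb_def by (simp add: scalar_prod_def)
  also have "\<dots> = (\<Sum>r\<in>{0..<2*n}. \<Sum>k<n. \<beta> k * (Cs k $$ (i,r) * w $ r))"
    by (simp add: sum_distrib_left sum_distrib_right mult_ac)
  also have "\<dots> = (\<Sum>k<n. \<Sum>r\<in>{0..<2*n}. \<beta> k * (Cs k $$ (i,r) * w $ r))"
    by (rule sum.swap)
  also have "\<dots> = (\<Sum>k<n. \<beta> k * (Cs k *\<^sub>v w) $ i)"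
  proof (rule sum.cong)
    fix k assume "k \<in> {..<n}"
    thus "(\<Sum>r\<in>{0..<2*n}. \<beta> k * (Cs k $$ (i,r) * w $ r)) = \<beta> k * (Cs k *\<^sub>v w) $ i"
      using Cs[of k] i w by (simp add: scalar_prod_def sum_distrib_left)
  qed simp
  finally show ?thesis .
qed

lemma Jmat_lincomb_mult_vec:
  assumes n: "0 < n" and Cs: "\<And>k. k < n \<Longrightarrow> Cs k \<in> carrier_mat (2*n) (2*n)"
    and w: "w \<in> carrier_vec (2*n)"
  shows "Jmat n (lincomb \<beta> Cs *\<^sub>v w) = lincomb \<beta> (\<lambda>k. Jmat n (Cs k *\<^sub>v w))"
proof (rule eq_matI)
  fix a b assume "a < dim_row (lincomb \<beta> (\<lambda>k. Jmat n (Cs k *\<^sub>v w)))"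
    "b < dim_col (lincomb \<beta> (\<lambda>k. Jmat n (Cs k *\<^sub>v w)))"
  hence ab: "a < 2*n" "b < 2*n" unfolding lincomb_def by auto
  have i1: "(a + (b - n)) mod n < 2*n" "(a - n + b) mod n < 2*n"
    using n by (auto simp: mod_less_double)
  show "Jmat n (lincomb \<beta> Cs *\<^sub>v w) $$ (a, b) = lincomb \<beta> (\<lambda>k. Jmat n (Cs k *\<^sub>v w)) $$ (a, b)"
    unfolding index_Jmat[OF ab] index_lincomb[OF ab] using ab
    by (auto simp: index_Jmat index_lincomb_mult_vec[OF Cs w] mod_less_double n sum_negf)
qed (auto simp: lincomb_def)

lemma J_compatible_lincomb:
  assumes n: "0 < n" and g: "\<And>k. k < n \<Longrightarrow> J_compatible (Cs k)"
  shows "J_compatible (lincomb \<beta> Cs)"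
proof -
  have Cs: "\<And>k. k < n \<Longrightarrow> Cs k \<in> carrier_mat (2*n) (2*n)" using g unfolding J_compatible_def by auto
  have CsT: "\<And>k. k < n \<Longrightarrow> (Cs k)\<^sup>T \<in> carrier_mat (2*n) (2*n)" using Cs by simp
  have j: "Jmat n w * lincomb \<beta> Cs = (lincomb \<beta> Cs)\<^sup>T * Jmat n w" for w
  proof -
    have "Jmat n w * lincomb \<beta> Cs = lincomb \<beta> (\<lambda>k. Jmat n w * Cs k)"
      by (rule lincomb_mult_left[OF Cs]) auto
    also have "\<dots> = lincomb \<beta> (\<lambda>k. (Cs k)\<^sup>T * Jmat n w)"
      unfolding lincomb_def using g unfolding J_compatible_def by (auto intro!: eq_matI sum.cong)
    also have "\<dots> = lincomb \<beta> (\<lambda>k. (Cs k)\<^sup>T) * Jmat n w"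
      by (rule lincomb_mult_right[OF CsT, symmetric]) auto
    finally show ?thesis using transpose_lincomb[OF Cs] by simp
  qed
  have v: "Jmat n ((lincomb \<beta> Cs)\<^sup>T *\<^sub>v w) = (lincomb \<beta> Cs)\<^sup>T * Jmat n w"
    if w: "w \<in> carrier_vec (2*n)" for w
  proof -
    have "Jmat n ((lincomb \<beta> Cs)\<^sup>T *\<^sub>v w) = Jmat n (lincomb \<beta> (\<lambda>k. (Cs k)\<^sup>T) *\<^sub>v w)"
      using transpose_lincomb[OF Cs] by simp
    also have "\<dots> = lincomb \<beta> (\<lambda>k. Jmat n ((Cs k)\<^sup>T *\<^sub>v w))"
      by (rule Jmat_lincomb_mult_vec[OF n CsT w])
    also have "\<dots> = lincomb \<beta> (\<lambda>k. (Cs k)\<^sup>T * Jmat n w)"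
      unfolding lincomb_def using g w unfolding J_compatible_def by (auto intro!: eq_matI sum.cong)
    also have "\<dots> = lincomb \<beta> (\<lambda>k. (Cs k)\<^sup>T) * Jmat n w"
      by (rule lincomb_mult_right[OF CsT, symmetric]) auto
    finally show ?thesis using transpose_lincomb[OF Cs] by simp
  qed
  show ?thesis unfolding J_compatible_def using j v by auto
qed

lemma twisted_comm_lincomb:
  assumes Cs: "\<And>k. k < n \<Longrightarrow> Cs k \<in> carrier_mat (2*n) (2*n)"
    and M: "M \<in> carrier_mat (2*n) (2*n)"
    and c: "\<And>k. k < n \<Longrightarrow> Cs k * M = M * (Cs k)\<^sup>T"
  shows "lincomb \<beta> Cs * M = M * (lincomb \<beta> Cs)\<^sup>T"
proof -
  have CsT: "\<And>k. k < n \<Longrightarrow> (Cs k)\<^sup>T \<in> carrier_mat (2*n) (2*n)" using Cs by simp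
  have "lincomb \<beta> Cs * M = lincomb \<beta> (\<lambda>k. Cs k * M)" by (rule lincomb_mult_right[OF Cs M])
  also have "\<dots> = lincomb \<beta> (\<lambda>k. M * (Cs k)\<^sup>T)"
    unfolding lincomb_def using c by (auto intro!: eq_matI sum.cong)
  also have "\<dots> = M * lincomb \<beta> (\<lambda>k. (Cs k)\<^sup>T)" by (rule lincomb_mult_left[OF CsT M, symmetric])
  finally show ?thesis using transpose_lincomb[OF Cs] by simp
qed

lemma twisted_comm_pow:
  fixes A M :: "complex mat"
  assumes A: "A \<in> carrier_mat (2*n) (2*n)" and M: "M \<in> carrier_mat (2*n) (2*n)"
    and c: "A * M = M * A\<^sup>T"
  shows "A ^\<^sub>m k * M = M * (A ^\<^sub>m k)\<^sup>T"
proof (induction k)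
  case 0 thus ?case using A M by (simp add: left_mult_one_mat right_mult_one_mat)
next
  case (Suc k)
  have Ak: "A ^\<^sub>m k \<in> carrier_mat (2*n) (2*n)" using A by simp
  have "A ^\<^sub>m Suc k * M = A ^\<^sub>m k * (A * M)" using assoc_mult_mat[OF Ak A M] by simp
  also have "\<dots> = (A ^\<^sub>m k * M) * A\<^sup>T" using c A M Ak by simp
  also have "\<dots> = M * ((A ^\<^sub>m k)\<^sup>T * A\<^sup>T)" using Suc A M Ak by simp
  also have "(A ^\<^sub>m k)\<^sup>T * A\<^sup>T = (A ^\<^sub>m Suc k)\<^sup>T"
    using transpose_mult[OF A Ak] pow_mat_commute[OF A, of k] by simp
  finally show ?case .
qed

lemma lincomb_comm:
  assumes Cs: "\<And>k. k < n \<Longrightarrow> Cs k \<in> carrier_mat (2*n) (2*n)"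
    and X: "X \<in> carrier_mat (2*n) (2*n)"
    and c: "\<And>k. k < n \<Longrightarrow> Cs k * X = X * Cs k"
  shows "lincomb \<beta> Cs * X = X * lincomb \<beta> Cs"
proof -
  have "lincomb \<beta> Cs * X = lincomb \<beta> (\<lambda>k. Cs k * X)" by (rule lincomb_mult_right[OF Cs X])
  also have "\<dots> = lincomb \<beta> (\<lambda>k. X * Cs k)"
    unfolding lincomb_def using c by (auto intro!: eq_matI sum.cong)
  also have "\<dots> = X * lincomb \<beta> Cs" by (rule lincomb_mult_left[OF Cs X, symmetric])
  finally show ?thesis .
qed

lemma Bmat_carrier[simp]: "Bmat n \<alpha> \<in> carrier_mat (2*n) (2*n)"
  unfolding Bmat_def by simp

lemma J_compatible_Bmat: "0 < n \<Longrightarrow> J_compatible (Bmat n \<alpha>)"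
  unfolding Bmat_eq_lincomb
  by (rule J_compatible_lincomb[OF _ J_compatible_pow[OF J_compatible_Amat]])

lemma Bmat_twisted_comm:
  assumes M: "M \<in> carrier_mat (2*n) (2*n)" and AM: "Amat n * M = M * (Amat n)\<^sup>T"
  shows "Bmat n \<alpha> * M = M * (Bmat n \<alpha>)\<^sup>T"
  unfolding Bmat_eq_lincomb
  by (rule twisted_comm_lincomb[OF _ M twisted_comm_pow[OF Amat_carrier M AM]]) simp

lemma Amat_Bmat_comm: "Amat n * Bmat n \<alpha> = Bmat n \<alpha> * Amat n"
  unfolding Bmat_eq_lincomb
  by (rule lincomb_comm[OF _ Amat_carrier pow_mat_commute[OF Amat_carrier], symmetric]) simp

section \<open>Derivatives of the modified Hamiltonian\<close>

lemma has_mat_deriv0_Jmat_line: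
  assumes y: "y \<in> carrier_vec (2*n)" and u: "u \<in> carrier_vec (2*n)" and n: "0 < n"
  shows "has_mat_deriv0 (2*n) (2*n) (\<lambda>s. Jmat n (y + s \<cdot>\<^sub>v u)) (Jmat n u)"
proof -
  have "has_mat_deriv0 (2*n) (2*n) (\<lambda>s. Jmat n y + s \<cdot>\<^sub>m Jmat n u) (0\<^sub>m (2*n) (2*n) + Jmat n u)"
    by (intro has_mat_deriv0_add has_mat_deriv0_const has_mat_deriv0_smult_var) auto
  hence "has_mat_deriv0 (2*n) (2*n) (\<lambda>s. Jmat n y + s \<cdot>\<^sub>m Jmat n u) (Jmat n u)" by simp
  then show ?thesis
    by (rule has_mat_deriv0_cong) (use Jmat_add[OF n y] Jmat_smult[OF n u] u in simp)
qed

text \<open>Write \<open>D(y) = I - \<epsilon>\<^sup>2 (J(y) M)\<^sup>2\<close> and \<open>R(y) = D(y)\<^sup>-\<^sup>1\<close>. Then \<open>sqJM_deriv M u y\<close> and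
  \<open>sqJM_deriv2 M u v\<close> are the first and second derivatives of \<open>(J(y) M)\<^sup>2\<close> in the directions \<open>u\<close>
  and \<open>u, v\<close>, \<open>resolvent_deriv\<close> and \<open>resolvent_deriv2\<close> those of \<open>R\<close>, \<open>modH_deriv X M y e u\<close> is the
  derivative of \<open>y \<mapsto> y\<^sup>T X R(y) y\<close> in direction \<open>u\<close>, and \<open>modH_deriv2\<close> the second derivative
  of \<open>y \<mapsto> y\<^sup>T M R(y) y\<close>.\<close>

definition sqJM_deriv :: "complex mat \<Rightarrow> complex vec \<Rightarrow> complex vec \<Rightarrow> complex mat" where
  "sqJM_deriv M u y = (Jmat n u * M) * (Jmat n y * M) + (Jmat n y * M) * (Jmat n u * M)"

definition sqJM_deriv2 :: "complex mat \<Rightarrow> complex vec \<Rightarrow> complex vec \<Rightarrow> complex mat" where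
  "sqJM_deriv2 M u v = (Jmat n v * M) * (Jmat n u * M) + (Jmat n u * M) * (Jmat n v * M)"

definition resolvent :: "complex mat \<Rightarrow> complex vec \<Rightarrow> real \<Rightarrow> complex mat" where
  "resolvent M y e = minv (Dmat n M y e)"

definition resolvent_deriv :: "complex mat \<Rightarrow> complex vec \<Rightarrow> real \<Rightarrow> complex vec \<Rightarrow> complex mat" where
  "resolvent_deriv M y e u =
     (complex_of_real e)^2 \<cdot>\<^sub>m (resolvent M y e * sqJM_deriv M u y * resolvent M y e)"

definition resolvent_deriv2 ::
    "complex mat \<Rightarrow> complex vec \<Rightarrow> real \<Rightarrow> complex vec \<Rightarrow> complex vec \<Rightarrow> complex mat" where
  "resolvent_deriv2 M y e u v = (complex_of_real e)^2 \<cdot>\<^sub>m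
     ((resolvent_deriv M y e u * sqJM_deriv M v y + resolvent M y e * sqJM_deriv2 M u v)
        * resolvent M y e
      + (resolvent M y e * sqJM_deriv M v y) * resolvent_deriv M y e u)"

definition modH_deriv ::
    "complex mat \<Rightarrow> complex mat \<Rightarrow> complex vec \<Rightarrow> real \<Rightarrow> complex vec \<Rightarrow> complex" where
  "modH_deriv X M y e u = u \<bullet> ((X * resolvent M y e) *\<^sub>v y)
     + y \<bullet> ((X * resolvent_deriv M y e u) *\<^sub>v y) + y \<bullet> ((X * resolvent M y e) *\<^sub>v u)"

definition modH_deriv2 ::
    "complex mat \<Rightarrow> complex vec \<Rightarrow> real \<Rightarrow> complex vec \<Rightarrow> complex vec \<Rightarrow> complex" where
  "modH_deriv2 M y e u v =
     (v \<bullet> ((M * resolvent_deriv M y e u) *\<^sub>v y) + v \<bullet> ((M * resolvent M y e) *\<^sub>v u))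
   + (u \<bullet> ((M * resolvent_deriv M y e v) *\<^sub>v y) + y \<bullet> ((M * resolvent_deriv2 M y e u v) *\<^sub>v y)
      + y \<bullet> ((M * resolvent_deriv M y e v) *\<^sub>v u))
   + (u \<bullet> ((M * resolvent M y e) *\<^sub>v v) + y \<bullet> ((M * resolvent_deriv M y e u) *\<^sub>v v))"

lemma Dmat_carrier[simp]:
  "M \<in> carrier_mat (2*n) (2*n) \<Longrightarrow> Dmat n M y e \<in> carrier_mat (2*n) (2*n)"
  unfolding Dmat_def by simp

lemma sqJM_deriv_carrier[simp]:
  "M \<in> carrier_mat (2*n) (2*n) \<Longrightarrow> sqJM_deriv M u y \<in> carrier_mat (2*n) (2*n)"
  unfolding sqJM_deriv_def by simp

lemma sqJM_deriv2_carrier[simp]: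
  "M \<in> carrier_mat (2*n) (2*n) \<Longrightarrow> sqJM_deriv2 M u v \<in> carrier_mat (2*n) (2*n)"
  unfolding sqJM_deriv2_def by simp

lemma resolvent_inverse:
  assumes "M \<in> carrier_mat (2*n) (2*n)" and "det (Dmat n M y e) \<noteq> 0"
  shows "resolvent M y e \<in> carrier_mat (2*n) (2*n)" "Dmat n M y e * resolvent M y e = 1\<^sub>m (2*n)"
    "resolvent M y e * Dmat n M y e = 1\<^sub>m (2*n)"
  unfolding resolvent_def using minv_inverse[of "Dmat n M y e" "2*n"] assms by simp_all

lemmas resolvent_carrier[simp] = resolvent_inverse(1)

lemma resolvent_deriv_carrier[simp]:
  "M \<in> carrier_mat (2*n) (2*n) \<Longrightarrow> det (Dmat n M y e) \<noteq> 0
    \<Longrightarrow> resolvent_deriv M y e u \<in> carrier_mat (2*n) (2*n)"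
  unfolding resolvent_deriv_def by simp

lemma has_mat_deriv0_JM_line:
  assumes M: "M \<in> carrier_mat (2*n) (2*n)" and y: "y \<in> carrier_vec (2*n)"
    and u: "u \<in> carrier_vec (2*n)" and n: "0 < n"
  shows "has_mat_deriv0 (2*n) (2*n) (\<lambda>s. Jmat n (y + s \<cdot>\<^sub>v u) * M) (Jmat n u * M)"
  by (rule has_mat_deriv0_mult_const[OF has_mat_deriv0_Jmat_line[OF y u n] M])

lemma has_mat_deriv0_Dmat_line:
  assumes M: "M \<in> carrier_mat (2*n) (2*n)" and y: "y \<in> carrier_vec (2*n)"
    and u: "u \<in> carrier_vec (2*n)" and n: "0 < n"
  shows "has_mat_deriv0 (2*n) (2*n) (\<lambda>s. Dmat n M (y + s \<cdot>\<^sub>v u) e)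
    (- ((complex_of_real e)^2 \<cdot>\<^sub>m sqJM_deriv M u y))"
proof -
  note JM = has_mat_deriv0_JM_line[OF M y u n]
  have "has_mat_deriv0 (2*n) (2*n) (\<lambda>s. 1\<^sub>m (2*n) - (complex_of_real e)^2 \<cdot>\<^sub>m
        ((Jmat n (y + s \<cdot>\<^sub>v u) * M) * (Jmat n (y + s \<cdot>\<^sub>v u) * M)))
     (0\<^sub>m (2*n) (2*n) - (complex_of_real e)^2 \<cdot>\<^sub>m ((Jmat n u * M) * (Jmat n (y + 0 \<cdot>\<^sub>v u) * M)
       + (Jmat n (y + 0 \<cdot>\<^sub>v u) * M) * (Jmat n u * M)))"
    using has_mat_deriv0_diff[OF has_mat_deriv0_const[of "1\<^sub>m (2*n)"]
        has_mat_deriv0_smult[OF has_mat_deriv0_mult[OF JM JM]]] by simp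
  then show ?thesis unfolding Dmat_def sqJM_deriv_def using M y u by simp
qed

lemma has_mat_deriv0_resolvent_line:
  assumes M: "M \<in> carrier_mat (2*n) (2*n)" and y: "y \<in> carrier_vec (2*n)"
    and u: "u \<in> carrier_vec (2*n)" and n: "0 < n" and d: "det (Dmat n M y e) \<noteq> 0"
  shows "has_mat_deriv0 (2*n) (2*n) (\<lambda>s. resolvent M (y + s \<cdot>\<^sub>v u) e) (resolvent_deriv M y e u)"
proof -
  have "has_mat_deriv0 (2*n) (2*n) (\<lambda>s. minv (Dmat n M (y + s \<cdot>\<^sub>v u) e))
     (- (minv (Dmat n M (y + 0 \<cdot>\<^sub>v u) e) * (- ((complex_of_real e)^2 \<cdot>\<^sub>m sqJM_deriv M u y))
         * minv (Dmat n M (y + 0 \<cdot>\<^sub>v u) e)))"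
    by (rule has_mat_deriv0_minv[OF has_mat_deriv0_Dmat_line[OF M y u n]]) (use d y u in simp)
  then show ?thesis
    unfolding resolvent_deriv_def resolvent_def[symmetric] using M d y u by simp
qed

lemma has_mat_deriv0_sqJM_deriv_line:
  assumes M: "M \<in> carrier_mat (2*n) (2*n)" and y: "y \<in> carrier_vec (2*n)"
    and u: "u \<in> carrier_vec (2*n)" and n: "0 < n"
  shows "has_mat_deriv0 (2*n) (2*n) (\<lambda>s. sqJM_deriv M v (y + s \<cdot>\<^sub>v u)) (sqJM_deriv2 M u v)"
proof -
  have c: "Jmat n v * M \<in> carrier_mat (2*n) (2*n)" using M by simp
  note JM = has_mat_deriv0_JM_line[OF M y u n]
  have "has_mat_deriv0 (2*n) (2*n)
      (\<lambda>s. (Jmat n v * M) * (Jmat n (y + s \<cdot>\<^sub>v u) * M)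
        + (Jmat n (y + s \<cdot>\<^sub>v u) * M) * (Jmat n v * M))
      ((Jmat n v * M) * (Jmat n u * M) + (Jmat n u * M) * (Jmat n v * M))"
    by (rule has_mat_deriv0_add[OF has_mat_deriv0_const_mult[OF c JM]
          has_mat_deriv0_mult_const[OF JM c]])
  then show ?thesis unfolding sqJM_deriv_def sqJM_deriv2_def .
qed

lemma has_mat_deriv0_resolvent_deriv_line:
  assumes M: "M \<in> carrier_mat (2*n) (2*n)" and y: "y \<in> carrier_vec (2*n)"
    and u: "u \<in> carrier_vec (2*n)" and n: "0 < n" and d: "det (Dmat n M y e) \<noteq> 0"
  shows "has_mat_deriv0 (2*n) (2*n) (\<lambda>s. resolvent_deriv M (y + s \<cdot>\<^sub>v u) e v)
    (resolvent_deriv2 M y e u v)"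
proof -
  note R = has_mat_deriv0_resolvent_line[OF M y u n d]
  have "has_mat_deriv0 (2*n) (2*n) (\<lambda>s. (complex_of_real e)^2 \<cdot>\<^sub>m
        (resolvent M (y + s \<cdot>\<^sub>v u) e * sqJM_deriv M v (y + s \<cdot>\<^sub>v u) * resolvent M (y + s \<cdot>\<^sub>v u) e))
     ((complex_of_real e)^2 \<cdot>\<^sub>m ((resolvent_deriv M y e u * sqJM_deriv M v (y + 0 \<cdot>\<^sub>v u)
        + resolvent M (y + 0 \<cdot>\<^sub>v u) e * sqJM_deriv2 M u v) * resolvent M (y + 0 \<cdot>\<^sub>v u) e
        + (resolvent M (y + 0 \<cdot>\<^sub>v u) e * sqJM_deriv M v (y + 0 \<cdot>\<^sub>v u)) * resolvent_deriv M y e u))"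
    by (rule has_mat_deriv0_smult[OF
          has_mat_deriv0_mult[OF has_mat_deriv0_mult[OF R
            has_mat_deriv0_sqJM_deriv_line[OF M y u n]] R]])
  then show ?thesis
    unfolding resolvent_deriv_def[of M "y + _ \<cdot>\<^sub>v u"] resolvent_deriv2_def using y u by simp
qed

lemma modH_form_line_deriv:
  assumes M: "M \<in> carrier_mat (2*n) (2*n)" and X: "X \<in> carrier_mat (2*n) (2*n)"
    and y: "y \<in> carrier_vec (2*n)" and u: "u \<in> carrier_vec (2*n)" and n: "0 < n"
    and d: "det (Dmat n M y e) \<noteq> 0"
  shows "((\<lambda>t. (y + t \<cdot>\<^sub>v u) \<bullet> ((X * minv (Dmat n M (y + t \<cdot>\<^sub>v u) e)) *\<^sub>v (y + t \<cdot>\<^sub>v u)))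
     has_field_derivative modH_deriv X M y e u) (at 0)"
  using quadratic_form_line_deriv[OF y u y u
      has_mat_deriv0_const_mult[OF X has_mat_deriv0_resolvent_line[OF M y u n d]]] y u
  unfolding modH_deriv_def resolvent_def by simp

lemma modH_deriv_line_deriv:
  assumes M: "M \<in> carrier_mat (2*n) (2*n)" and y: "y \<in> carrier_vec (2*n)"
    and u: "u \<in> carrier_vec (2*n)" and v: "v \<in> carrier_vec (2*n)" and n: "0 < n"
    and d: "det (Dmat n M y e) \<noteq> 0"
  shows "((\<lambda>s. modH_deriv M M (y + s \<cdot>\<^sub>v u) e v) has_field_derivative modH_deriv2 M y e u v) (at 0)"
proof -
  have z: "0\<^sub>v (2*n) \<in> carrier_vec (2*n)" by simp
  note MR = has_mat_deriv0_const_mult[OF M has_mat_deriv0_resolvent_line[OF M y u n d]]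
  note MR' = has_mat_deriv0_const_mult[OF M has_mat_deriv0_resolvent_deriv_line[OF M y u n d]]
  have d1: "((\<lambda>s. v \<bullet> ((M * resolvent M (y + s \<cdot>\<^sub>v u) e) *\<^sub>v (y + s \<cdot>\<^sub>v u))) has_field_derivative
      (v \<bullet> ((M * resolvent_deriv M y e u) *\<^sub>v y) + v \<bullet> ((M * resolvent M y e) *\<^sub>v u))) (at 0)"
    using quadratic_form_line_deriv[OF v z y u MR] y u v M d by simp
  have d2: "((\<lambda>s. (y + s \<cdot>\<^sub>v u) \<bullet> ((M * resolvent_deriv M (y + s \<cdot>\<^sub>v u) e v) *\<^sub>v (y + s \<cdot>\<^sub>v u)))
      has_field_derivative (u \<bullet> ((M * resolvent_deriv M y e v) *\<^sub>v y)
      + y \<bullet> ((M * resolvent_deriv2 M y e u v) *\<^sub>v y)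
      + y \<bullet> ((M * resolvent_deriv M y e v) *\<^sub>v u))) (at 0)"
    using quadratic_form_line_deriv[OF y u y u MR'] y u by simp
  have d3: "((\<lambda>s. (y + s \<cdot>\<^sub>v u) \<bullet> ((M * resolvent M (y + s \<cdot>\<^sub>v u) e) *\<^sub>v v)) has_field_derivative
      (u \<bullet> ((M * resolvent M y e) *\<^sub>v v) + y \<bullet> ((M * resolvent_deriv M y e u) *\<^sub>v v))) (at 0)"
    using quadratic_form_line_deriv[OF y u v z MR] y u v M d by simp
  show ?thesis unfolding modH_deriv_def modH_deriv2_def
    by (rule DERIV_add[OF DERIV_add[OF d1 d2] d3])
qed

lemma smult_smult_mat: "a \<cdot>\<^sub>m (b \<cdot>\<^sub>m A) = (a * b :: complex) \<cdot>\<^sub>m A"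
  by (intro eq_matI) auto

lemma modH_deriv_add:
  assumes M: "M \<in> carrier_mat (2*n) (2*n)" and n: "0 < n" and y: "y \<in> carrier_vec (2*n)"
    and a: "a \<in> carrier_vec (2*n)" and b: "b \<in> carrier_vec (2*n)"
    and d: "det (Dmat n M y e) \<noteq> 0"
  shows "modH_deriv M M y e (a + b) = modH_deriv M M y e a + modH_deriv M M y e b"
proof -
  have R: "resolvent M y e \<in> carrier_mat (2*n) (2*n)" using M d by simp
  have "sqJM_deriv M (a + b) y = sqJM_deriv M a y + sqJM_deriv M b y"
    unfolding sqJM_deriv_def Jmat_add[OF n a b] using M by (simp add: sq_add_comm sq_add_lcomm)
  then have "resolvent_deriv M y e (a + b) = resolvent_deriv M y e a + resolvent_deriv M y e b"
    unfolding resolvent_deriv_def using R M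
    by (simp add: add_smult_distrib_left_mat[of _ "2*n" "2*n"])
  then show ?thesis unfolding modH_deriv_def using R M y a b d by (simp add: add_ac)
qed

lemma modH_deriv_smult:
  assumes M: "M \<in> carrier_mat (2*n) (2*n)" and n: "0 < n" and y: "y \<in> carrier_vec (2*n)"
    and a: "a \<in> carrier_vec (2*n)" and d: "det (Dmat n M y e) \<noteq> 0"
  shows "modH_deriv M M y e (c \<cdot>\<^sub>v a) = c * modH_deriv M M y e a"
proof -
  have R: "resolvent M y e \<in> carrier_mat (2*n) (2*n)" using M d by simp
  have "sqJM_deriv M (c \<cdot>\<^sub>v a) y = c \<cdot>\<^sub>m sqJM_deriv M a y"
    unfolding sqJM_deriv_def Jmat_smult[OF n a] using M
    by (simp add: add_smult_distrib_left_mat[of _ "2*n" "2*n"])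
  then have "resolvent_deriv M y e (c \<cdot>\<^sub>v a) = c \<cdot>\<^sub>m resolvent_deriv M y e a"
    unfolding resolvent_deriv_def using R M by (simp add: smult_smult_mat mult.commute[of c])
  then show ?thesis unfolding modH_deriv_def using R M y a d by (simp add: distrib_left)
qed

text \<open>Linearity in the direction, applied to the partial sums \<open>\<Sum>k<m. u$k \<cdot> e\<^sub>k\<close> of \<open>u\<close>.\<close>

lemma modH_deriv_unit_expansion:
  assumes M: "M \<in> carrier_mat (2*n) (2*n)" and n: "0 < n" and y: "y \<in> carrier_vec (2*n)"
    and u: "u \<in> carrier_vec (2*n)" and d: "det (Dmat n M y e) \<noteq> 0"
  shows "modH_deriv M M y e u = (\<Sum>k<2*n. u $ k * modH_deriv M M y e (unit_vec (2*n) k))"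
proof -
  define pv where "pv m = vec (2*n) (\<lambda>i. if i < m then u $ i else 0)" for m
  have pv: "pv m \<in> carrier_vec (2*n)" for m unfolding pv_def by simp
  have "modH_deriv M M y e (pv m) = (\<Sum>k<m. u $ k * modH_deriv M M y e (unit_vec (2*n) k))"
    if "m \<le> 2*n" for m
    using that
  proof (induction m)
    case 0
    have "pv 0 = 0 \<cdot>\<^sub>v 0\<^sub>v (2*n)" unfolding pv_def by (intro eq_vecI) auto
    then show ?case using modH_deriv_smult[OF M n y _ d, of "0\<^sub>v (2*n)" 0] by simp
  next
    case (Suc m)
    have "pv (Suc m) = pv m + u $ m \<cdot>\<^sub>v unit_vec (2*n) m"
      unfolding pv_def using Suc.prems by (intro eq_vecI) (auto simp: unit_vec_def less_Suc_eq)
    then show ?case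
      using Suc modH_deriv_add[OF M n y pv _ d] modH_deriv_smult[OF M n y _ d] by simp
  qed
  moreover have "pv (2*n) = u" unfolding pv_def using u by (intro eq_vecI) auto
  ultimately show ?thesis by (metis order_refl)
qed

section \<open>Twisting by \<open>J\<close>-compatible matrices\<close>

lemma comm_mult_push:
  fixes T Z :: "complex mat"
  assumes T: "T \<in> carrier_mat (2*n) (2*n)" and Z: "Z \<in> carrier_mat (2*n) (2*n)"
    and TZ: "T * Z = Z * T"
  shows "X \<in> carrier_mat (2*n) (2*n) \<Longrightarrow> T * (Z * X) = Z * (T * X)"
    and "w \<in> carrier_vec (2*n) \<Longrightarrow> T *\<^sub>v (Z *\<^sub>v w) = Z *\<^sub>v (T *\<^sub>v w)"
proof -
  show "T * (Z * X) = Z * (T * X)" if X: "X \<in> carrier_mat (2*n) (2*n)"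
  proof -
    have "T * (Z * X) = (T * Z) * X" using T Z X by simp
    also have "\<dots> = Z * (T * X)" using TZ T Z X by simp
    finally show ?thesis .
  qed
  show "T *\<^sub>v (Z *\<^sub>v w) = Z *\<^sub>v (T *\<^sub>v w)" if w: "w \<in> carrier_vec (2*n)"
  proof -
    have "T *\<^sub>v (Z *\<^sub>v w) = (T * Z) *\<^sub>v w" using T Z w by simp
    also have "\<dots> = Z *\<^sub>v (T *\<^sub>v w)" using TZ T Z w by simp
    finally show ?thesis .
  qed
qed

lemma comm_inverse_mat:
  fixes T D R :: "complex mat"
  assumes T: "T \<in> carrier_mat (2*n) (2*n)" and D: "D \<in> carrier_mat (2*n) (2*n)"
    and R: "R \<in> carrier_mat (2*n) (2*n)" and TD: "T * D = D * T"
    and DR: "D * R = 1\<^sub>m (2*n)" and RD: "R * D = 1\<^sub>m (2*n)"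
  shows "T * R = R * T"
proof -
  have "R * T = (R * T) * (D * R)" using R T by (simp add: DR)
  also have "\<dots> = R * ((T * D) * R)" using R T D by simp
  also have "\<dots> = (R * D) * (T * R)" unfolding TD using R T D by simp
  also have "\<dots> = T * R" unfolding RD using R T by (simp add: left_mult_one_mat)
  finally show ?thesis by simp
qed

lemma twisted_comm_push:
  fixes M C :: "complex mat"
  assumes M: "M \<in> carrier_mat (2*n) (2*n)" and C: "C \<in> carrier_mat (2*n) (2*n)"
    and cm: "C * M = M * C\<^sup>T"
  shows "X \<in> carrier_mat (2*n) (2*n) \<Longrightarrow> C * (M * X) = M * (C\<^sup>T * X)"
    and "w \<in> carrier_vec (2*n) \<Longrightarrow> C *\<^sub>v (M *\<^sub>v w) = M *\<^sub>v (C\<^sup>T *\<^sub>v w)"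
    and "a \<in> carrier_vec (2*n) \<Longrightarrow> b \<in> carrier_vec (2*n) \<Longrightarrow> (C\<^sup>T *\<^sub>v a) \<bullet> b = a \<bullet> (C *\<^sub>v b)"
proof -
  show "C * (M * X) = M * (C\<^sup>T * X)" if X: "X \<in> carrier_mat (2*n) (2*n)"
  proof -
    have "C * (M * X) = (C * M) * X" using C M X by simp
    then show ?thesis using cm C M X by simp
  qed
  show "C *\<^sub>v (M *\<^sub>v w) = M *\<^sub>v (C\<^sup>T *\<^sub>v w)" if w: "w \<in> carrier_vec (2*n)"
  proof -
    have "C *\<^sub>v (M *\<^sub>v w) = (C * M) *\<^sub>v w" using C M w by simp
    then show ?thesis using cm C M w by simp
  qed
  show "(C\<^sup>T *\<^sub>v a) \<bullet> b = a \<bullet> (C *\<^sub>v b)" if "a \<in> carrier_vec (2*n)" "b \<in> carrier_vec (2*n)"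
    using transpose_vec_mult_scalar[OF C] that by blast
qed

lemma transpose_comm_JM:
  assumes M: "M \<in> carrier_mat (2*n) (2*n)" and g: "J_compatible C" and cm: "C * M = M * C\<^sup>T"
  shows "C\<^sup>T * (Jmat n w * M) = (Jmat n w * M) * C\<^sup>T"
proof -
  have C: "C \<in> carrier_mat (2*n) (2*n)" using g unfolding J_compatible_def by auto
  have "C\<^sup>T * (Jmat n w * M) = (C\<^sup>T * Jmat n w) * M" using C M by simp
  also have "\<dots> = (Jmat n w * C) * M" using g unfolding J_compatible_def by simp
  also have "\<dots> = Jmat n w * (M * C\<^sup>T)" using C M cm by simp
  finally show ?thesis using C M by simp
qed

lemma transpose_comm_sqJM_deriv:
  assumes M: "M \<in> carrier_mat (2*n) (2*n)" and g: "J_compatible C" and cm: "C * M = M * C\<^sup>T"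
  shows "C\<^sup>T * sqJM_deriv M u y = sqJM_deriv M u y * C\<^sup>T"
    and "C\<^sup>T * sqJM_deriv2 M u y = sqJM_deriv2 M u y * C\<^sup>T"
proof -
  have C: "C \<in> carrier_mat (2*n) (2*n)" using g unfolding J_compatible_def by auto
  have JM: "Jmat n w * M \<in> carrier_mat (2*n) (2*n)" for w using M by simp
  have push: "C\<^sup>T * (Jmat n w * (M * X)) = Jmat n w * (M * (C\<^sup>T * X))"
    if "X \<in> carrier_mat (2*n) (2*n)" for w X
    using comm_mult_push(1)[OF _ JM transpose_comm_JM[OF M g cm] that] C M that by simp
  have "C\<^sup>T * (Jmat n w * M) = Jmat n w * (M * C\<^sup>T)" for w
    using transpose_comm_JM[OF M g cm] C M by simp
  with push show "C\<^sup>T * sqJM_deriv M u y = sqJM_deriv M u y * C\<^sup>T"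
    and "C\<^sup>T * sqJM_deriv2 M u y = sqJM_deriv2 M u y * C\<^sup>T"
    unfolding sqJM_deriv_def sqJM_deriv2_def using C M by simp_all
qed

lemma transpose_comm_Dmat:
  assumes M: "M \<in> carrier_mat (2*n) (2*n)" and g: "J_compatible C" and cm: "C * M = M * C\<^sup>T"
  shows "C\<^sup>T * Dmat n M y e = Dmat n M y e * C\<^sup>T"
proof -
  have T: "C\<^sup>T \<in> carrier_mat (2*n) (2*n)" using g unfolding J_compatible_def by auto
  define A where "A = Jmat n y * M"
  have A: "A \<in> carrier_mat (2*n) (2*n)" unfolding A_def using M by simp
  have TA: "C\<^sup>T * A = A * C\<^sup>T" unfolding A_def by (rule transpose_comm_JM[OF M g cm])
  have TAA: "C\<^sup>T * (A * A) = (A * A) * C\<^sup>T"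
    using comm_mult_push(1)[OF T A TA A] TA T A by simp
  have D: "Dmat n M y e = 1\<^sub>m (2*n) - (complex_of_real e)^2 \<cdot>\<^sub>m (A * A)"
    unfolding Dmat_def A_def ..
  have "C\<^sup>T * Dmat n M y e = C\<^sup>T * 1\<^sub>m (2*n) - C\<^sup>T * ((complex_of_real e)^2 \<cdot>\<^sub>m (A * A))"
    unfolding D by (rule mult_minus_distrib_mat[OF T]) (use A in auto)
  also have "\<dots> = 1\<^sub>m (2*n) * C\<^sup>T - ((complex_of_real e)^2 \<cdot>\<^sub>m (A * A)) * C\<^sup>T"
    using T A TAA by simp
  also have "\<dots> = Dmat n M y e * C\<^sup>T"
    unfolding D by (rule minus_mult_distrib_mat[symmetric]) (use A T in auto)
  finally show ?thesis .
qed

lemma Dmat_twist_involution: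
  assumes M: "M \<in> carrier_mat (2*n) (2*n)" and g: "J_compatible B"
    and cm: "B * M = M * B\<^sup>T" and BB: "B * B = 1\<^sub>m (2*n)"
  shows "Dmat n (B * M) y e = Dmat n M y e"
proof -
  have B: "B \<in> carrier_mat (2*n) (2*n)" using g unfolding J_compatible_def by auto
  have T: "B\<^sup>T \<in> carrier_mat (2*n) (2*n)" using B by simp
  have JB: "Jmat n y * B = B\<^sup>T * Jmat n y" using g unfolding J_compatible_def by auto
  have TT: "B\<^sup>T * B\<^sup>T = 1\<^sub>m (2*n)" using transpose_mult[OF B B] BB by simp
  have TJ: "B\<^sup>T * (Jmat n y * M) = (Jmat n y * M) * B\<^sup>T" by (rule transpose_comm_JM[OF M g cm])
  have JBM: "Jmat n y * (B * M) = B\<^sup>T * (Jmat n y * M)"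
  proof -
    have "Jmat n y * (B * M) = (Jmat n y * B) * M" using B M by simp
    also have "\<dots> = B\<^sup>T * (Jmat n y * M)" unfolding JB using B M by simp
    finally show ?thesis .
  qed
  have "(Jmat n y * (B * M)) * (Jmat n y * (B * M))
      = (B\<^sup>T * (Jmat n y * M)) * (B\<^sup>T * (Jmat n y * M))"
    unfolding JBM ..
  also have "\<dots> = B\<^sup>T * ((Jmat n y * M) * B\<^sup>T) * (Jmat n y * M)" using T M by simp
  also have "\<dots> = B\<^sup>T * (B\<^sup>T * (Jmat n y * M)) * (Jmat n y * M)" unfolding TJ ..
  also have "\<dots> = (B\<^sup>T * B\<^sup>T) * ((Jmat n y * M) * (Jmat n y * M))" using T M by simp
  also have "\<dots> = (Jmat n y * M) * (Jmat n y * M)"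
    unfolding TT using M by (simp add: left_mult_one_mat)
  finally show ?thesis unfolding Dmat_def by simp
qed

lemma twisted_comm_mult:
  fixes C B M :: "complex mat"
  assumes C: "C \<in> carrier_mat (2*n) (2*n)" and B: "B \<in> carrier_mat (2*n) (2*n)"
    and M: "M \<in> carrier_mat (2*n) (2*n)" and CB: "C * B = B * C" and CM: "C * M = M * C\<^sup>T"
  shows "C * (B * M) = (B * M) * C\<^sup>T"
proof -
  have "C * (B * M) = B * (C * M)" by (rule comm_mult_push(1)[OF C B CB M])
  also have "\<dots> = (B * M) * C\<^sup>T" using B M C CM by simp
  finally show ?thesis .
qed

lemma transpose_comm_resolvent:
  assumes M: "M \<in> carrier_mat (2*n) (2*n)" and g: "J_compatible C" and cm: "C * M = M * C\<^sup>T"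
    and d: "det (Dmat n M y e) \<noteq> 0"
  shows "C\<^sup>T * resolvent M y e = resolvent M y e * C\<^sup>T"
  using comm_inverse_mat[OF _ _ _ transpose_comm_Dmat[OF M g cm] resolvent_inverse(2,3)[OF M d]]
    g M d unfolding J_compatible_def by simp

lemma sqJM_deriv_transpose_dir:
  assumes M: "M \<in> carrier_mat (2*n) (2*n)" and g: "J_compatible C" and cm: "C * M = M * C\<^sup>T"
    and u: "u \<in> carrier_vec (2*n)" and v: "v \<in> carrier_vec (2*n)"
  shows "sqJM_deriv M (C\<^sup>T *\<^sub>v u) y = C\<^sup>T * sqJM_deriv M u y"
    and "sqJM_deriv2 M (C\<^sup>T *\<^sub>v u) v = C\<^sup>T * sqJM_deriv2 M u v"
    and "sqJM_deriv2 M u (C\<^sup>T *\<^sub>v v) = C\<^sup>T * sqJM_deriv2 M u v"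
proof -
  have T: "C\<^sup>T \<in> carrier_mat (2*n) (2*n)" using g unfolding J_compatible_def by auto
  have Ju: "Jmat n (C\<^sup>T *\<^sub>v u) = C\<^sup>T * Jmat n u" and Jv: "Jmat n (C\<^sup>T *\<^sub>v v) = C\<^sup>T * Jmat n v"
    using g u v unfolding J_compatible_def by auto
  have JM: "Jmat n w * M \<in> carrier_mat (2*n) (2*n)" for w using M by simp
  have push: "(Jmat n w * M) * (C\<^sup>T * X) = C\<^sup>T * ((Jmat n w * M) * X)"
    if "X \<in> carrier_mat (2*n) (2*n)" for w X
    using comm_mult_push(1)[OF T JM transpose_comm_JM[OF M g cm] that] by simp
  have assoc: "(C\<^sup>T * Jmat n w) * M = C\<^sup>T * (Jmat n w * M)" for w using T M by simp
  have dist: "C\<^sup>T * X + C\<^sup>T * Y = C\<^sup>T * (X + Y)"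
    if "X \<in> carrier_mat (2*n) (2*n)" "Y \<in> carrier_mat (2*n) (2*n)" for X Y
    using mult_add_distrib_mat[OF T that] by simp
  have sw: "(C\<^sup>T * X) * Y = C\<^sup>T * (X * Y)"
    if "X \<in> carrier_mat (2*n) (2*n)" "Y \<in> carrier_mat (2*n) (2*n)" for X Y
    using T that by simp
  show "sqJM_deriv M (C\<^sup>T *\<^sub>v u) y = C\<^sup>T * sqJM_deriv M u y"
    unfolding sqJM_deriv_def Ju assoc push[OF JM] sw[OF JM JM] by (rule dist) (use M in simp_all)
  show "sqJM_deriv2 M (C\<^sup>T *\<^sub>v u) v = C\<^sup>T * sqJM_deriv2 M u v"
    unfolding sqJM_deriv2_def Ju assoc push[OF JM] sw[OF JM JM] by (rule dist) (use M in simp_all)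
  show "sqJM_deriv2 M u (C\<^sup>T *\<^sub>v v) = C\<^sup>T * sqJM_deriv2 M u v"
    unfolding sqJM_deriv2_def Jv assoc push[OF JM] sw[OF JM JM] by (rule dist) (use M in simp_all)
qed

lemma resolvent_deriv_transpose:
  assumes M: "M \<in> carrier_mat (2*n) (2*n)" and g: "J_compatible C" and cm: "C * M = M * C\<^sup>T"
    and u: "u \<in> carrier_vec (2*n)" and d: "det (Dmat n M y e) \<noteq> 0"
  shows "resolvent_deriv M y e (C\<^sup>T *\<^sub>v u) = C\<^sup>T * resolvent_deriv M y e u"
    and "C\<^sup>T * resolvent_deriv M y e u = resolvent_deriv M y e u * C\<^sup>T"
proof -
  have T: "C\<^sup>T \<in> carrier_mat (2*n) (2*n)" using g unfolding J_compatible_def by auto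
  have R: "resolvent M y e \<in> carrier_mat (2*n) (2*n)" using M d by simp
  have P: "sqJM_deriv M u y \<in> carrier_mat (2*n) (2*n)" using M by simp
  note TR = transpose_comm_resolvent[OF M g cm d]
  note TP = transpose_comm_sqJM_deriv(1)[OF M g cm, of u y]
  note pR = comm_mult_push(1)[OF T R TR] and pP = comm_mult_push(1)[OF T P TP]
  show "resolvent_deriv M y e (C\<^sup>T *\<^sub>v u) = C\<^sup>T * resolvent_deriv M y e u"
    unfolding resolvent_deriv_def sqJM_deriv_transpose_dir(1)[OF M g cm u u]
    using T R P by (simp add: pR pP TR TP)
  show "C\<^sup>T * resolvent_deriv M y e u = resolvent_deriv M y e u * C\<^sup>T"
    unfolding resolvent_deriv_def using T R P by (simp add: pR pP TR TP)
qed

lemma modH_deriv_twist: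
  assumes M: "M \<in> carrier_mat (2*n) (2*n)" and g: "J_compatible C" and cm: "C * M = M * C\<^sup>T"
    and y: "y \<in> carrier_vec (2*n)" and u: "u \<in> carrier_vec (2*n)"
    and d: "det (Dmat n M y e) \<noteq> 0"
  shows "modH_deriv (C * M) M y e u = modH_deriv M M y e (C\<^sup>T *\<^sub>v u)"
proof -
  have C: "C \<in> carrier_mat (2*n) (2*n)" using g unfolding J_compatible_def by auto
  have T: "C\<^sup>T \<in> carrier_mat (2*n) (2*n)" using C by simp
  have R: "resolvent M y e \<in> carrier_mat (2*n) (2*n)"
    and R': "resolvent_deriv M y e u \<in> carrier_mat (2*n) (2*n)" using M d by simp_all
  note TR = transpose_comm_resolvent[OF M g cm d]
  note TR' = resolvent_deriv_transpose[OF M g cm u d]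
  note push = comm_mult_push[OF T R TR] comm_mult_push[OF T R' TR'(2)] twisted_comm_push[OF M C cm]
  show ?thesis unfolding modH_deriv_def TR'(1) using M C T R R' y u
    by (simp add: push TR TR'(2))
qed

lemma modH_deriv2_twist_sym:
  assumes M: "M \<in> carrier_mat (2*n) (2*n)" and g: "J_compatible C" and cm: "C * M = M * C\<^sup>T"
    and y: "y \<in> carrier_vec (2*n)" and u: "u \<in> carrier_vec (2*n)" and v: "v \<in> carrier_vec (2*n)"
    and d: "det (Dmat n M y e) \<noteq> 0"
  shows "modH_deriv2 M y e (C\<^sup>T *\<^sub>v u) v = modH_deriv2 M y e u (C\<^sup>T *\<^sub>v v)"
proof -
  have C: "C \<in> carrier_mat (2*n) (2*n)" using g unfolding J_compatible_def by auto
  have T: "C\<^sup>T \<in> carrier_mat (2*n) (2*n)" using C by simp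
  have R: "resolvent M y e \<in> carrier_mat (2*n) (2*n)"
    and R'u: "resolvent_deriv M y e u \<in> carrier_mat (2*n) (2*n)"
    and R'v: "resolvent_deriv M y e v \<in> carrier_mat (2*n) (2*n)" using M d by simp_all
  have Pv: "sqJM_deriv M v y \<in> carrier_mat (2*n) (2*n)"
    and P2: "sqJM_deriv2 M u v \<in> carrier_mat (2*n) (2*n)" using M by simp_all
  note TR = transpose_comm_resolvent[OF M g cm d]
  note TR'u = resolvent_deriv_transpose[OF M g cm u d]
  note TR'v = resolvent_deriv_transpose[OF M g cm v d]
  note TPv = transpose_comm_sqJM_deriv(1)[OF M g cm, of v y]
  note TP2 = transpose_comm_sqJM_deriv(2)[OF M g cm, of u v]
  note push = comm_mult_push[OF T R TR] comm_mult_push[OF T R'u TR'u(2)]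
    comm_mult_push[OF T R'v TR'v(2)] comm_mult_push[OF T Pv TPv] comm_mult_push[OF T P2 TP2]
    twisted_comm_push[OF M C cm]
  note dirs = TR'u(1) TR'v(1) sqJM_deriv_transpose_dir(1)[OF M g cm v v, of y]
    sqJM_deriv_transpose_dir(2,3)[OF M g cm u v]
  show ?thesis unfolding modH_deriv2_def resolvent_deriv2_def dirs using M C T R R'u R'v Pv P2 y u v
    by (simp add: push TR TR'u(2) TR'v(2) TPv TP2 algebra_simps)
qed

section \<open>Gradient and Hessian\<close>

lemma cderiv_eqI: "(f has_field_derivative D) (at z) \<Longrightarrow> cderiv f z = D"
  unfolding cderiv_def by (rule some_equality) (auto intro: DERIV_unique)

lemma index_transpose_mult_unit_vec:
  fixes C :: "complex mat"
  assumes C: "C \<in> carrier_mat (2*n) (2*n)" and j: "j < 2*n" and k: "k < 2*n"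
  shows "(C\<^sup>T *\<^sub>v unit_vec (2*n) j) $ k = C $$ (j,k)"
proof -
  have "(C\<^sup>T *\<^sub>v unit_vec (2*n) j) $ k = (\<Sum>i\<in>{0..<2*n}. C $$ (i,k) * (if i = j then 1 else 0))"
    using C j k by (simp add: scalar_prod_def unit_vec_def)
  also have "\<dots> = (\<Sum>i\<in>{0..<2*n}. if i = j then C $$ (i,k) else 0)" by (rule sum.cong) auto
  finally show ?thesis using j by (simp add: sum.delta)
qed

lemma Amat_transpose_mult_unit_vec:
  assumes n: "0 < n" and i: "i < 2*n"
  shows "(Amat n)\<^sup>T *\<^sub>v unit_vec (2*n) i = unit_vec (2*n) (shift_idx n i)"
proof (rule eq_vecI)
  fix k assume "k < dim_vec (unit_vec (2*n) (shift_idx n i))"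
  then have k: "k < 2*n" by simp
  have "((Amat n)\<^sup>T *\<^sub>v unit_vec (2*n) i) $ k = unit_vec (2*n) i $ unshift_idx n k"
    by (rule index_Amat_transpose_mult_vec[OF n _ k]) simp
  also have "\<dots> = unit_vec (2*n) (shift_idx n i) $ k"
    using unshift_idx_less[OF n k] k shift_idx_eq_iff[OF n i k] by (auto simp: unit_vec_def)
  finally show "((Amat n)\<^sup>T *\<^sub>v unit_vec (2*n) i) $ k = unit_vec (2*n) (shift_idx n i) $ k" .
qed simp

lemma grad_modH_form:
  assumes M: "M \<in> carrier_mat (2*n) (2*n)" and X: "X \<in> carrier_mat (2*n) (2*n)"
    and x: "x \<in> carrier_vec (2*n)" and n: "0 < n" and d: "det (Dmat n M x e) \<noteq> 0"
  shows "grad n (\<lambda>y. y \<bullet> ((X * minv (Dmat n M y e)) *\<^sub>v y)) x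
    = vec (2*n) (\<lambda>j. modH_deriv X M x e (unit_vec (2*n) j))"
  unfolding grad_def
  by (intro eq_vecI) (auto intro!: cderiv_eqI modH_form_line_deriv[OF M X x _ n d])

lemma eventually_det_Dmat_line_nonzero:
  assumes M: "M \<in> carrier_mat (2*n) (2*n)" and x: "x \<in> carrier_vec (2*n)"
    and u: "u \<in> carrier_vec (2*n)" and n: "0 < n" and d: "det (Dmat n M x e) \<noteq> 0"
  shows "\<forall>\<^sub>F s in nhds 0. det (Dmat n M (x + s \<cdot>\<^sub>v u) e) \<noteq> 0"
proof -
  note D = has_mat_deriv0_Dmat_line[OF M x u n, of e]
  have "differentiable_at0 (\<lambda>s. det (Dmat n M (x + s \<cdot>\<^sub>v u) e))"
    using differentiable_at0_det[OF has_mat_deriv0_eventually_carrier[OF D]]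
      has_mat_deriv0_differentiable[OF D] by blast
  from differentiable_at0_eventually_nonzero[OF this] show ?thesis using d x u by simp
qed

lemma hess_modH:
  assumes M: "M \<in> carrier_mat (2*n) (2*n)" and x: "x \<in> carrier_vec (2*n)" and n: "0 < n"
    and d: "det (Dmat n M x e) \<noteq> 0"
  shows "hess n (\<lambda>y. modH n M y e) x
    = mat (2*n) (2*n) (\<lambda>(i,j). modH_deriv2 M x e (unit_vec (2*n) i) (unit_vec (2*n) j))"
    (is "_ = ?W")
proof (rule eq_matI)
  fix i j assume "i < dim_row ?W" "j < dim_col ?W"
  then have ij: "i < 2*n" "j < 2*n" by auto
  let ?ei = "unit_vec (2*n) i" and ?ej = "unit_vec (2*n) j"
  have ev: "\<forall>\<^sub>F s in nhds 0.
      grad n (\<lambda>y. modH n M y e) (x + s \<cdot>\<^sub>v ?ei) $ j = modH_deriv M M (x + s \<cdot>\<^sub>v ?ei) e ?ej"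
    using eventually_det_Dmat_line_nonzero[OF M x unit_vec_carrier[of "2*n" i] n d]
  proof eventually_elim
    case (elim s)
    have "x + s \<cdot>\<^sub>v ?ei \<in> carrier_vec (2*n)" using x by simp
    from grad_modH_form[OF M M this n elim] show ?case unfolding modH_def using ij by simp
  qed
  have "((\<lambda>s. grad n (\<lambda>y. modH n M y e) (x + s \<cdot>\<^sub>v ?ei) $ j)
      has_field_derivative modH_deriv2 M x e ?ei ?ej) (at 0)"
    using modH_deriv_line_deriv[OF M x _ _ n d, of ?ei ?ej] ev DERIV_cong_ev[of 0 0] by fastforce
  then show "hess n (\<lambda>y. modH n M y e) x $$ (i, j) = ?W $$ (i, j)"
    unfolding hess_def using ij by (simp add: cderiv_eqI)
qed (auto simp: hess_def)

lemma grad_modH_twist: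
  assumes M: "M \<in> carrier_mat (2*n) (2*n)" and g: "J_compatible B"
    and cm: "B * M = M * B\<^sup>T" and BB: "B * B = 1\<^sub>m (2*n)"
    and x: "x \<in> carrier_vec (2*n)" and n: "0 < n" and d: "det (Dmat n M x e) \<noteq> 0"
  shows "grad n (\<lambda>y. modH n (B * M) y e) x = B *\<^sub>v grad n (\<lambda>y. modH n M y e) x"
proof -
  have B: "B \<in> carrier_mat (2*n) (2*n)" using g unfolding J_compatible_def by auto
  have BM: "B * M \<in> carrier_mat (2*n) (2*n)" using B M by simp
  have D: "\<And>y. Dmat n (B * M) y e = Dmat n M y e" by (rule Dmat_twist_involution[OF M g cm BB])
  let ?g = "vec (2*n) (\<lambda>j. modH_deriv M M x e (unit_vec (2*n) j))"
  have gK: "grad n (\<lambda>y. modH n (B * M) y e) x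
      = vec (2*n) (\<lambda>j. modH_deriv (B * M) M x e (unit_vec (2*n) j))"
    unfolding modH_def D by (rule grad_modH_form[OF M BM x n d])
  have gH: "grad n (\<lambda>y. modH n M y e) x = ?g"
    unfolding modH_def by (rule grad_modH_form[OF M M x n d])
  have "modH_deriv (B * M) M x e (unit_vec (2*n) j) = (B *\<^sub>v ?g) $ j" if j: "j < 2*n" for j
  proof -
    have "modH_deriv (B * M) M x e (unit_vec (2*n) j)
        = modH_deriv M M x e (B\<^sup>T *\<^sub>v unit_vec (2*n) j)"
      by (rule modH_deriv_twist[OF M g cm x unit_vec_carrier d])
    also have "\<dots> = (\<Sum>k<2*n. (B\<^sup>T *\<^sub>v unit_vec (2*n) j) $ k * modH_deriv M M x e (unit_vec (2*n) k))"
      by (rule modH_deriv_unit_expansion[OF M n x _ d]) (use B in simp)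
    also have "\<dots> = (\<Sum>k<2*n. B $$ (j,k) * modH_deriv M M x e (unit_vec (2*n) k))"
      by (rule sum.cong) (use index_transpose_mult_unit_vec[OF B j] in auto)
    also have "\<dots> = (B *\<^sub>v ?g) $ j"
      using B j by (simp add: scalar_prod_def atLeast0LessThan)
    finally show ?thesis .
  qed
  then show ?thesis unfolding gK gH using B by (intro eq_vecI) auto
qed

text \<open>Since \<open>A\<^sup>T\<close> permutes the unit vectors, \<open>modH_deriv2_twist_sym\<close> for \<open>C = A\<close> is the entrywise
  form of \<open>A W = W A\<^sup>T\<close> for the Hessian \<open>W\<close>.\<close>

lemma Amat_hess_modH_comm:
  assumes M: "M \<in> carrier_mat (2*n) (2*n)" and cm: "Amat n * M = M * (Amat n)\<^sup>T"
    and x: "x \<in> carrier_vec (2*n)" and n: "0 < n" and d: "det (Dmat n M x e) \<noteq> 0"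
  shows "Amat n * hess n (\<lambda>y. modH n M y e) x = hess n (\<lambda>y. modH n M y e) x * (Amat n)\<^sup>T"
proof -
  let ?e = "unit_vec (2*n)"
  let ?W = "mat (2*n) (2*n) (\<lambda>(i,j). modH_deriv2 M x e (?e i) (?e j))"
  have W: "?W \<in> carrier_mat (2*n) (2*n)" by simp
  have "Amat n * ?W = ?W * (Amat n)\<^sup>T"
  proof (rule eq_matI)
    fix i j assume "i < dim_row (?W * (Amat n)\<^sup>T)" "j < dim_col (?W * (Amat n)\<^sup>T)"
    then have ij: "i < 2*n" "j < 2*n" by auto
    have "(Amat n * ?W) $$ (i,j) = ?W $$ (shift_idx n i, j)" by (rule index_Amat_mult[OF n W ij])
    also have "\<dots> = modH_deriv2 M x e ((Amat n)\<^sup>T *\<^sub>v ?e i) (?e j)"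
      using shift_idx_less[OF n ij(1)] ij Amat_transpose_mult_unit_vec[OF n ij(1)] by simp
    also have "\<dots> = modH_deriv2 M x e (?e i) ((Amat n)\<^sup>T *\<^sub>v ?e j)"
      by (rule modH_deriv2_twist_sym[OF M J_compatible_Amat[OF n] cm x _ _ d]) simp_all
    also have "\<dots> = ?W $$ (i, shift_idx n j)"
      using shift_idx_less[OF n ij(2)] ij Amat_transpose_mult_unit_vec[OF n ij(2)] by simp
    also have "\<dots> = (?W * (Amat n)\<^sup>T) $$ (i,j)"
      by (rule index_mult_Amat_transpose[OF n W ij, symmetric])
    finally show "(Amat n * ?W) $$ (i,j) = (?W * (Amat n)\<^sup>T) $$ (i,j)" .
  qed auto
  then show ?thesis unfolding hess_modH[OF M x n d] .
qed

end

theorem mainTheorem4: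
  fixes n :: nat and Hr :: "real mat" and \<alpha> :: "nat \<Rightarrow> complex"
    and x :: "complex vec" and \<epsilon> :: real
  assumes n2: "n \<ge> 2"
    and adm: "admissible n Hr"
    and B_sq: "Bmat n \<alpha> * Bmat n \<alpha> = 1\<^sub>m (2*n)"
    and x_dim: "x \<in> carrier_vec (2*n)"
  shows
    "let B = Bmat n \<alpha>;
         HH = map_mat complex_of_real Hr;
         KK = B * HH;
         Ht = (\<lambda>y. modH n HH y \<epsilon>);
         Kt = (\<lambda>y. modH n KK y \<epsilon>)
     in (det (Dmat n HH x \<epsilon>) \<noteq> 0 \<and> det (Dmat n KK x \<epsilon>) \<noteq> 0 \<longrightarrow>
           grad n Kt x = B *\<^sub>v grad n Ht x)
      \<and> (det (Dmat n HH x \<epsilon>) \<noteq> 0 \<longrightarrow>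
           Amat n * hess n Ht x = hess n Ht x * (Amat n)\<^sup>T)
      \<and> (det (Dmat n KK x \<epsilon>) \<noteq> 0 \<longrightarrow>
           Amat n * hess n Kt x = hess n Kt x * (Amat n)\<^sup>T)"
proof -
  have n: "0 < n" using n2 by simp
  define B where "B = Bmat n \<alpha>"
  define HH where "HH = map_mat complex_of_real Hr"
  have HH: "HH \<in> carrier_mat (2*n) (2*n)" and AH: "Amat n * HH = HH * (Amat n)\<^sup>T"
    using adm unfolding admissible_def HH_def by auto
  have B: "B \<in> carrier_mat (2*n) (2*n)" unfolding B_def by simp
  have AK: "Amat n * (B * HH) = (B * HH) * (Amat n)\<^sup>T"
    unfolding B_def by (rule twisted_comm_mult[OF Amat_carrier _ HH Amat_Bmat_comm AH]) simp
  have "grad n (\<lambda>y. modH n (B * HH) y \<epsilon>) x = B *\<^sub>v grad n (\<lambda>y. modH n HH y \<epsilon>) x"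
    if "det (Dmat n HH x \<epsilon>) \<noteq> 0"
    using grad_modH_twist[OF HH J_compatible_Bmat[OF n] Bmat_twisted_comm[OF HH AH] B_sq x_dim n
        that]
    unfolding B_def .
  then show ?thesis
    unfolding Let_def B_def[symmetric] HH_def[symmetric]
    using Amat_hess_modH_comm[OF HH AH x_dim n] Amat_hess_modH_comm[OF _ AK x_dim n] B HH by auto
qed

end
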